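(* Let $W$ be an sc-Banach space and let $g:\mathcal O(([0,\infty)^k\oplus\mathbb R^{n-k})\oplus W,0)\to\mathbb R^N\oplus W$ be an sc-smooth germ such that, with $P:\mathbb R^N\oplus W\to W$ the canonical projection, the germ $P\circ(g-g(0,0)):\mathcal O(([0,\infty)^k\oplus\mathbb R^{n-k})\oplus W,0)\to W$ is an $\mathrm{sc}^0$-contraction germ. Then $g$ is linearized Fredholm at $0$ and its Fredholm index is $\operatorname{Ind}(g,0)=n-N$.
   Context: An sc-Banach space is a Banach space $E$ with a nested sequence of Banach spaces $E=E_0\supset E_1\supset\cdots$, the inclusions $E_n\to E_m$ ($m<n$) compact and $E_\infty=\bigcap E_m$ dense in each $E_m$; finite-dimensional spaces carry the constant structure, direct sums the levelwise one; $F^1$ denotes $F_1$ with levels $(F^1)_m=F_{m+1}$. A germ of neighborhoods $\mathcal O(C,0)$ is a decreasing sequence $U_0\supset U_1\supset\cdots$ with $U_m$ relatively open neighborhood of $0$ in $C\cap E_m$. An $\mathrm{sc}^0$-germ $g:\mathcal O(C,0)\to F$ is a continuous $g:U_0\to F_0$ with $g(U_m)\subset F_m$ and $g:U_m\to F_m$ continuous for all $m$ (an "$\mathrm{sc}^0$-germ into $(F,0)$" additionally has $g(0)=0$). It is $\mathrm{sc}^1$ if for $x\in U_1$ there is $Dg(x)\in\mathcal L(E_0,F_0)$ with $\|g(x+h)-g(x)-Dg(x)h\|_0/\|h\|_1\to0$ as $\|h\|_1\to0$ and $Tg(x,h)=(g(x),Dg(x)h)$ maps $U_{m+1}\oplus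 E_m$ into $F_{m+1}\oplus F_m$ and is an $\mathrm{sc}^0$-germ; $\mathrm{sc}^k$ inductively ($Tg$ of class $\mathrm{sc}^{k-1}$); sc-smooth means $\mathrm{sc}^k$ for all $k$ (then $g(0)\in F_\infty$). An $\mathrm{sc}^+$-germ is an $\mathrm{sc}$-smooth germ $s$ with $s(U_m)\subset F_{m+1}$ which is sc-smooth as a germ into $F^1$. An sc-operator is a bounded linear $T:E\to F$ mapping $E_m$ continuously into $F_m$ for all $m$. It is sc-Fredholm if there are levelwise topological splittings $E=K\oplus X$, $F=Y\oplus C$ into closed subspaces compatible with all levels such that $K=\ker T$ and $C$ are finite-dimensional, $Y=T(X)$ and $T:X\to Y$ is an sc-isomorphism; its index is $\dim K-\dim C$. The germ $g$ is linearized Fredholm at $0$ if for an $\mathrm{sc}^+$-germ $s$ with $s(0)=g(0)$ the linearization $D(g-s)(0)$ is an sc-Fredholm operator; its index $\operatorname{Ind}(g,0)$ is the Fredholm index of $D(g-s)(0)$ (this does not depend on the choice of $s$). An $\mathrm{sc}^0$-contraction germ is an $\mathrm{sc}^0$-germ $f:\mathcal O(V\oplus W,0)\to(W,0)$, $V$ a finite-dimensional partial quadrant, of the form $f(v,w)=w-B(v,w)$ with: for every $m$ and $0<\varepsilon<1$, $\|B(v,w)-B(v,w')\|_m\le\varepsilon\|w-w'\|_m$ for $(v,w),(v,w')$ sufficiently close to $(0,0)$ in $V\oplus W_m$. *)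

theory Defs
  imports "HOL-Analysis.Analysis" "HOL-Library.Function_Algebras"
begin

instantiation "fun" :: (type, real_vector) real_vector
begin
definition scaleR_fun :: "real \<Rightarrow> ('a \<Rightarrow> 'b) \<Rightarrow> 'a \<Rightarrow> 'b"
  where "scaleR_fun c f = (\<lambda>x. c *\<^sub>R f x)"
instance
  by standard (auto simp: scaleR_fun_def fun_eq_iff scaleR_add_right scaleR_add_left)
end

section \<open>Scales: nested level sets with level norms\<close>

type_synonym 'a scale = "(nat \<Rightarrow> 'a set) \<times> (nat \<Rightarrow> 'a \<Rightarrow> real)"

definition lev :: "'a scale \<Rightarrow> nat \<Rightarrow> 'a set" where "lev S = fst S"
definition nrm :: "'a scale \<Rightarrow> nat \<Rightarrow> 'a \<Rightarrow> real" where "nrm S = snd S"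

definition lconv :: "'a::real_vector scale \<Rightarrow> nat \<Rightarrow> (nat \<Rightarrow> 'a) \<Rightarrow> 'a \<Rightarrow> bool" where
  "lconv S m X x \<longleftrightarrow> (\<forall>e>0. \<exists>N. \<forall>i\<ge>N. nrm S m (X i - x) < e)"

definition sc_banach :: "'a::banach scale \<Rightarrow> bool" where
  "sc_banach S \<longleftrightarrow>
     lev S 0 = UNIV \<and> (\<forall>x. nrm S 0 x = norm x) \<and>
     (\<forall>m. lev S (Suc m) \<subseteq> lev S m) \<and>
     (\<forall>m. subspace (lev S m)) \<and>
     (\<forall>m. \<forall>x\<in>lev S m. \<forall>y\<in>lev S m. \<forall>c.
          0 \<le> nrm S m x \<and> (nrm S m x = 0 \<longleftrightarrow> x = 0) \<and>
          nrm S m (c *\<^sub>R x) = \<bar>c\<bar> * nrm S m x \<and>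
          nrm S m (x + y) \<le> nrm S m x + nrm S m y) \<and>
     (\<forall>m X. (\<forall>i. X i \<in> lev S m) \<and>
            (\<forall>e>0. \<exists>N. \<forall>i\<ge>N. \<forall>j\<ge>N. nrm S m (X i - X j) < e)
            \<longrightarrow> (\<exists>x\<in>lev S m. lconv S m X x)) \<and>
     (\<forall>m (X::nat \<Rightarrow> 'a). (\<forall>i. X i \<in> lev S (Suc m)) \<and> (\<exists>B. \<forall>i. nrm S (Suc m) (X i) \<le> B)
            \<longrightarrow> (\<exists>r x. strict_mono r \<and> x \<in> lev S m \<and> lconv S m (X \<circ> r) x)) \<and>
     (\<forall>m. \<forall>x\<in>lev S m. \<forall>e>0. \<exists>y\<in>(\<Inter>k. lev S k). nrm S m (x - y) < e)"

definition const_scale :: "'a::real_normed_vector scale" where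
  "const_scale = (\<lambda>_. UNIV, \<lambda>_. norm)"

definition prod_scale :: "'a scale \<Rightarrow> 'b scale \<Rightarrow> ('a \<times> 'b) scale" where
  "prod_scale A B = (\<lambda>m. lev A m \<times> lev B m,
                     \<lambda>m p. sqrt ((nrm A m (fst p))\<^sup>2 + (nrm B m (snd p))\<^sup>2))"

definition shift_scale :: "'a scale \<Rightarrow> 'a scale" where
  "shift_scale S = (\<lambda>m. lev S (Suc m), \<lambda>m. nrm S (Suc m))"

text \<open>germ of neighbourhoods O(C,0): decreasing U_m, U_m relatively open neighbourhood of 0
  in C \<inter> E_m (topology of E_m)\<close>
definition germ_nbhd :: "'a::real_vector scale \<Rightarrow> 'a set \<Rightarrow> (nat \<Rightarrow> 'a set) \<Rightarrow> bool" where
  "germ_nbhd E C U \<longleftrightarrow>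
     (\<forall>m. U (Suc m) \<subseteq> U m) \<and>
     (\<forall>m. U m \<subseteq> C \<inter> lev E m \<and> 0 \<in> U m \<and>
          (\<forall>x\<in>U m. \<exists>d>0. \<forall>y\<in>C \<inter> lev E m. nrm E m (y - x) < d \<longrightarrow> y \<in> U m))"

definition sc0 :: "'a::real_vector scale \<Rightarrow> 'b::real_vector scale \<Rightarrow> (nat \<Rightarrow> 'a set)
                    \<Rightarrow> ('a \<Rightarrow> 'b) \<Rightarrow> bool" where
  "sc0 E F U g \<longleftrightarrow>
     (\<forall>m. g ` U m \<subseteq> lev F m \<and>
          (\<forall>x\<in>U m. \<forall>e>0. \<exists>d>0. \<forall>y\<in>U m. nrm E m (y - x) < d \<longrightarrow> nrm F m (g y - g x) < e))"

definition sc_deriv :: "'a::real_vector scale \<Rightarrow> 'b::real_vector scale \<Rightarrow> (nat \<Rightarrow> 'a set)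
                         \<Rightarrow> ('a \<Rightarrow> 'b) \<Rightarrow> 'a \<Rightarrow> ('a \<Rightarrow> 'b) \<Rightarrow> bool" where
  "sc_deriv E F U g x L \<longleftrightarrow>
     (\<forall>h\<in>lev E 0. L h \<in> lev F 0) \<and>
     (\<forall>h1\<in>lev E 0. \<forall>h2\<in>lev E 0. \<forall>c.
         L (h1 + h2) = L h1 + L h2 \<and> L (c *\<^sub>R h1) = c *\<^sub>R L h1) \<and>
     (\<exists>B. \<forall>h\<in>lev E 0. nrm F 0 (L h) \<le> B * nrm E 0 h) \<and>
     (\<forall>e>0. \<exists>d>0. \<forall>h. x + h \<in> U 1 \<and> nrm E 1 h < d \<longrightarrow>
                nrm F 0 (g (x + h) - g x - L h) \<le> e * nrm E 1 h)"

text \<open>T^j E is realised as tuples x :: nat \<Rightarrow> 'a with 2^j components; component i lies in the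
  shifted level E^(tsh j i).  T(X) = X^1 \<oplus> X puts X^1 in the first half.\<close>
fun tsh :: "nat \<Rightarrow> nat \<Rightarrow> nat" where
  "tsh 0 i = 0"
| "tsh (Suc j) i = (if i < 2 ^ j then Suc (tsh j i) else tsh j (i - 2 ^ j))"

definition tscale :: "'a::real_vector scale \<Rightarrow> nat \<Rightarrow> (nat \<Rightarrow> 'a) scale" where
  "tscale S j = (\<lambda>m. {x. (\<forall>i<2 ^ j. x i \<in> lev S (m + tsh j i)) \<and> (\<forall>i\<ge>2 ^ j. x i = 0)},
                 \<lambda>m x. \<Sum>i<2 ^ j. nrm S (m + tsh j i) (x i))"

definition tdom :: "'a::real_vector scale \<Rightarrow> (nat \<Rightarrow> 'a set) \<Rightarrow> nat \<Rightarrow> nat \<Rightarrow> (nat \<Rightarrow> 'a) set" where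
  "tdom E U j m = {x \<in> lev (tscale E j) m. x 0 \<in> U (m + j)}"

definition lowhalf :: "nat \<Rightarrow> (nat \<Rightarrow> 'a::zero) \<Rightarrow> nat \<Rightarrow> 'a" where
  "lowhalf j x = (\<lambda>i. if i < 2 ^ j then x i else 0)"
definition highhalf :: "nat \<Rightarrow> (nat \<Rightarrow> 'a::zero) \<Rightarrow> nat \<Rightarrow> 'a" where
  "highhalf j x = (\<lambda>i. if i < 2 ^ j then x (i + 2 ^ j) else 0)"

fun tmap :: "'a::real_vector scale \<Rightarrow> 'b::real_vector scale \<Rightarrow> (nat \<Rightarrow> 'a set) \<Rightarrow> ('a \<Rightarrow> 'b)
              \<Rightarrow> nat \<Rightarrow> (nat \<Rightarrow> 'a) \<Rightarrow> nat \<Rightarrow> 'b" where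
  "tmap E F U g 0 x = (\<lambda>i. if i = 0 then g (x 0) else 0)"
| "tmap E F U g (Suc j) x =
     (let lo = lowhalf j x; hi = highhalf j x;
          L = (SOME L. sc_deriv (tscale E j) (tscale F j) (tdom E U j) (tmap E F U g j) lo L)
      in (\<lambda>i. if i < 2 ^ j then tmap E F U g j lo i
               else if i < 2 ^ Suc j then L hi (i - 2 ^ j) else 0))"

text \<open>sc^k: T^j g is sc^0 for j \<le> k, and T^j g has an sc-derivative at every point of its
  level-1 domain for j < k (this unfolds the inductive definition "Tg is sc^(k-1)")\<close>
definition sck :: "'a::real_vector scale \<Rightarrow> 'b::real_vector scale \<Rightarrow> (nat \<Rightarrow> 'a set)
                    \<Rightarrow> ('a \<Rightarrow> 'b) \<Rightarrow> nat \<Rightarrow> bool" where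
  "sck E F U g k \<longleftrightarrow>
     (\<forall>j\<le>k. sc0 (tscale E j) (tscale F j) (tdom E U j) (tmap E F U g j) \<and>
             (j < k \<longrightarrow> (\<forall>x\<in>tdom E U j 1.
                 \<exists>L. sc_deriv (tscale E j) (tscale F j) (tdom E U j) (tmap E F U g j) x L)))"

definition sc_smooth :: "'a::real_vector scale \<Rightarrow> 'b::real_vector scale \<Rightarrow> (nat \<Rightarrow> 'a set)
                         \<Rightarrow> ('a \<Rightarrow> 'b) \<Rightarrow> bool" where
  "sc_smooth E F U g \<longleftrightarrow> (\<forall>k. sck E F U g k)"

definition sc_plus :: "'a::real_vector scale \<Rightarrow> 'b::real_vector scale \<Rightarrow> (nat \<Rightarrow> 'a set)
                       \<Rightarrow> ('a \<Rightarrow> 'b) \<Rightarrow> bool" where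
  "sc_plus E F U s \<longleftrightarrow>
     sc_smooth E F U s \<and> (\<forall>m. s ` U m \<subseteq> lev F (Suc m)) \<and> sc_smooth E (shift_scale F) U s"

definition sc_operator :: "'a::real_vector scale \<Rightarrow> 'b::real_vector scale \<Rightarrow> ('a \<Rightarrow> 'b) \<Rightarrow> bool" where
  "sc_operator E F T \<longleftrightarrow>
     (\<forall>h1\<in>lev E 0. \<forall>h2\<in>lev E 0. \<forall>c.
         T (h1 + h2) = T h1 + T h2 \<and> T (c *\<^sub>R h1) = c *\<^sub>R T h1) \<and>
     (\<forall>m. \<forall>x\<in>lev E m. T x \<in> lev F m) \<and>
     (\<forall>m. \<exists>B. \<forall>x\<in>lev E m. nrm F m (T x) \<le> B * nrm E m x)"

definition lclosed :: "'a::real_vector scale \<Rightarrow> nat \<Rightarrow> 'a set \<Rightarrow> bool" where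
  "lclosed E m A \<longleftrightarrow> (\<forall>X x. (\<forall>i. X i \<in> A) \<and> x \<in> lev E m \<and> lconv E m X x \<longrightarrow> x \<in> A)"

definition sc_splitting :: "'a::real_vector scale \<Rightarrow> 'a set \<Rightarrow> 'a set \<Rightarrow> bool" where
  "sc_splitting E A B \<longleftrightarrow>
     subspace A \<and> subspace B \<and> A \<subseteq> lev E 0 \<and> B \<subseteq> lev E 0 \<and> A \<inter> B = {0} \<and>
     (\<forall>m. \<forall>x\<in>lev E m. \<exists>a\<in>A \<inter> lev E m. \<exists>b\<in>B \<inter> lev E m. x = a + b) \<and>
     (\<forall>m. lclosed E m (A \<inter> lev E m) \<and> lclosed E m (B \<inter> lev E m)) \<and>
     (\<forall>m. \<exists>K. \<forall>a\<in>A \<inter> lev E m. \<forall>b\<in>B \<inter> lev E m.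
            nrm E m a \<le> K * nrm E m (a + b) \<and> nrm E m b \<le> K * nrm E m (a + b))"

definition sc_iso_on :: "'a::real_vector scale \<Rightarrow> 'b::real_vector scale \<Rightarrow> 'a set \<Rightarrow> 'b set
                         \<Rightarrow> ('a \<Rightarrow> 'b) \<Rightarrow> bool" where
  "sc_iso_on E F X Y T \<longleftrightarrow>
     (\<forall>m. bij_betw T (X \<inter> lev E m) (Y \<inter> lev F m)) \<and>
     (\<forall>m. \<exists>B. \<forall>x\<in>X \<inter> lev E m. nrm F m (T x) \<le> B * nrm E m x \<and> nrm E m x \<le> B * nrm F m (T x))"

definition findim :: "'a::real_vector set \<Rightarrow> bool" where
  "findim A \<longleftrightarrow> (\<exists>B. finite B \<and> span B = A)"

definition sc_fredholm_index :: "'a::real_vector scale \<Rightarrow> 'b::real_vector scale \<Rightarrow> ('a \<Rightarrow> 'b)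
                                 \<Rightarrow> int \<Rightarrow> bool" where
  "sc_fredholm_index E F T i \<longleftrightarrow>
     sc_operator E F T \<and>
     (\<exists>K X Y C. sc_splitting E K X \<and> sc_splitting F Y C \<and>
        K = {x\<in>lev E 0. T x = 0} \<and> findim K \<and> findim C \<and>
        Y = T ` X \<and> sc_iso_on E F X Y T \<and>
        i = int (dim K) - int (dim C))"

definition lin_fredholm_index :: "'a::real_vector scale \<Rightarrow> 'b::real_vector scale \<Rightarrow> (nat \<Rightarrow> 'a set)
                                  \<Rightarrow> ('a \<Rightarrow> 'b) \<Rightarrow> int \<Rightarrow> bool" where
  "lin_fredholm_index E F U g i \<longleftrightarrow>
     (\<exists>s L. sc_plus E F U s \<and> s 0 = g 0 \<and>
            sc_deriv E F U (\<lambda>x. g x - s x) 0 L \<and> sc_fredholm_index E F L i)"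

definition quadrant :: "'n::finite set \<Rightarrow> (real ^ 'n) set" where
  "quadrant J = {v. \<forall>i\<in>J. 0 \<le> v $ i}"

text \<open>f : O(V \<oplus> W, 0) \<rightarrow> (W, 0), f(v,w) = w - B(v,w), B a contraction in w on every level\<close>
definition sc0_contraction :: "'v::real_normed_vector set \<Rightarrow> 'w::real_vector scale
                               \<Rightarrow> (nat \<Rightarrow> ('v \<times> 'w) set) \<Rightarrow> ('v \<times> 'w \<Rightarrow> 'w) \<Rightarrow> bool" where
  "sc0_contraction V W U f \<longleftrightarrow>
     germ_nbhd (prod_scale const_scale W) (V \<times> UNIV) U \<and>
     sc0 (prod_scale const_scale W) W U f \<and> f (0, 0) = 0 \<and>
     (\<forall>m e. 0 < e \<and> e < 1 \<longrightarrow>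
        (\<exists>d>0. \<forall>v w w'. (v, w) \<in> U m \<and> (v, w') \<in> U m \<and>
            norm v < d \<and> nrm W m w < d \<and> nrm W m w' < d \<longrightarrow>
            nrm W m ((w - f (v, w)) - (w' - f (v, w'))) \<le> e * nrm W m (w - w')))"

end

theory Submission
  imports Defs
begin

text \<open>
  Let $D = Dg(0)$. Continuity of the tangent map $Tg$ at $(0, 0)$ shows that $D$ is an
  sc-operator. Comparing the contraction property of $w \mapsto w - P(g(0, w) - g(0, 0))$ with the
  first order approximation of $g$ along the $W$-axis gives $P D(0, w) = w$ for $w \in W_1$, hence
  for all $w$ by density. So $D(v, w) = D(v, 0) + (c(w), w)$ with $c = \mathrm{pr}_1 D(0, \cdot)$.
  The affine germ $s(v, w) = g(0) + D(v, 0)$ depends only on the finite-dimensional coordinate,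
  hence is $\mathrm{sc}^+$, and $D(g - s)(0)$ is $(v, w) \mapsto (c(w), w)$: an sc-Fredholm operator
  with kernel $\mathbb R^n \oplus 0$ and cokernel $\mathbb R^N \oplus 0$, of index $n - N$.

  Proving $s$ sc-smooth means computing all its tangent maps $T^j s$, whose definition chooses a
  derivative at each step. On the partial quadrant this choice is unique, since every vector of
  $E_1$ is a difference of two directions pointing into the quadrant and $E_1$ is dense.
\<close>

section \<open>Normed scales\<close>

lemma scaleR_fun_apply [simp]: "(c *\<^sub>R f) x = c *\<^sub>R f x"
  by (simp add: scaleR_fun_def)

lemma lev_const_scale [simp]: "lev const_scale m = UNIV"
  by (simp add: lev_def const_scale_def)

lemma nrm_const_scale [simp]: "nrm const_scale m = norm"
  by (simp add: nrm_def const_scale_def)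

lemma lev_prod_scale [simp]: "lev (prod_scale A B) m = lev A m \<times> lev B m"
  by (simp add: lev_def prod_scale_def)

lemma nrm_prod_scale:
  "nrm (prod_scale A B) m p = sqrt ((nrm A m (fst p))\<^sup>2 + (nrm B m (snd p))\<^sup>2)"
  by (simp add: nrm_def prod_scale_def)

lemma lev_shift_scale [simp]: "lev (shift_scale S) m = lev S (Suc m)"
  by (simp add: lev_def shift_scale_def)

lemma nrm_shift_scale [simp]: "nrm (shift_scale S) m = nrm S (Suc m)"
  by (simp add: nrm_def shift_scale_def)

lemma lev_tscale:
  "x \<in> lev (tscale S j) m \<longleftrightarrow> (\<forall>i<2^j. x i \<in> lev S (m + tsh j i)) \<and> (\<forall>i\<ge>2^j. x i = 0)"
  by (simp add: lev_def tscale_def)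

lemma lev_tscale_component: "x \<in> lev (tscale S j) m \<Longrightarrow> i < 2^j \<Longrightarrow> x i \<in> lev S (m + tsh j i)"
  by (simp add: lev_tscale)

lemma nrm_tscale: "nrm (tscale S j) m x = (\<Sum>i<2^j. nrm S (m + tsh j i) (x i))"
  by (simp add: nrm_def tscale_def)

lemma tsh_0 [simp]: "tsh j 0 = j"
  by (induction j) auto

lemma tsh_1: "tsh 1 0 = 1" "tsh 1 1 = 0"
  by (simp_all add: numeral_eq_Suc)

lemma nonpos_if_le_eps_mult:
  fixes a K :: real
  assumes "\<And>e. e > 0 \<Longrightarrow> a \<le> e * K"
  shows "a \<le> 0"
proof (rule field_le_epsilon)
  fix e :: real assume "e > 0"
  then have "a \<le> e / (\<bar>K\<bar> + 1) * K" by (intro assms) simp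
  also have "\<dots> \<le> e / (\<bar>K\<bar> + 1) * (\<bar>K\<bar> + 1)"
    using \<open>e > 0\<close> by (intro mult_left_mono) auto
  finally show "a \<le> 0 + e" by simp
qed

lemma nonneg_bound_if_bound:
  fixes f n :: "'a \<Rightarrow> real"
  assumes "\<forall>x\<in>A. f x \<le> B * n x" and "\<And>x. x \<in> A \<Longrightarrow> 0 \<le> n x"
  shows "\<exists>B\<ge>0. \<forall>x\<in>A. f x \<le> B * n x"
proof (intro exI[of _ "\<bar>B\<bar>"] conjI ballI)
  fix x assume "x \<in> A"
  then show "f x \<le> \<bar>B\<bar> * n x"
    using assms mult_right_mono[OF abs_ge_self, of "n x" B] by fastforce
qed simp

text \<open>The norm axioms of an sc-Banach space without completeness and compactness; unlike those,
  they pass to the tangent scales \<open>tscale\<close>.\<close>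
locale normed_scale =
  fixes S :: "'a::real_vector scale"
  assumes lev_subspace: "subspace (lev S m)"
    and lev_Suc_subset: "lev S (Suc m) \<subseteq> lev S m"
    and nrm_nonneg: "x \<in> lev S m \<Longrightarrow> 0 \<le> nrm S m x"
    and nrm_eq_0_iff: "x \<in> lev S m \<Longrightarrow> nrm S m x = 0 \<longleftrightarrow> x = 0"
    and nrm_scaleR: "x \<in> lev S m \<Longrightarrow> nrm S m (c *\<^sub>R x) = \<bar>c\<bar> * nrm S m x"
    and nrm_triangle: "x \<in> lev S m \<Longrightarrow> y \<in> lev S m \<Longrightarrow> nrm S m (x + y) \<le> nrm S m x + nrm S m y"
begin

lemma zero_mem [simp]: "0 \<in> lev S m"
  using lev_subspace subspace_0 by blast

lemma add_mem: "x \<in> lev S m \<Longrightarrow> y \<in> lev S m \<Longrightarrow> x + y \<in> lev S m"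
  using lev_subspace subspace_add by blast

lemma diff_mem: "x \<in> lev S m \<Longrightarrow> y \<in> lev S m \<Longrightarrow> x - y \<in> lev S m"
  using lev_subspace subspace_diff by blast

lemma scaleR_mem: "x \<in> lev S m \<Longrightarrow> c *\<^sub>R x \<in> lev S m"
  using lev_subspace subspace_scale by blast

lemma nrm_zero [simp]: "nrm S m 0 = 0"
  using nrm_eq_0_iff zero_mem by blast

lemma nrm_minus_commute: "x \<in> lev S m \<Longrightarrow> y \<in> lev S m \<Longrightarrow> nrm S m (x - y) = nrm S m (y - x)"
  using nrm_scaleR[of "y - x" m "-1"] diff_mem by simp

lemma nrm_triangle_diff:
  "x \<in> lev S m \<Longrightarrow> y \<in> lev S m \<Longrightarrow> nrm S m (x - y) \<le> nrm S m x + nrm S m y"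
  using nrm_triangle[of x m "-1 *\<^sub>R y"] nrm_scaleR[of y m "-1"] scaleR_mem[of y m "-1"] by simp

lemma lev_antimono: "m \<le> k \<Longrightarrow> lev S k \<subseteq> lev S m"
  by (induction k rule: dec_induct) (use lev_Suc_subset in blast)+

lemma eq_0_if_nrm_le_eps_mult:
  assumes "x \<in> lev S m" and "\<And>e. e > 0 \<Longrightarrow> nrm S m x \<le> e * K"
  shows "x = 0"
  using nonpos_if_le_eps_mult[OF assms(2)] nrm_nonneg[OF assms(1)] nrm_eq_0_iff[OF assms(1)]
  by simp

end

lemma normed_scale_shift: "normed_scale S \<Longrightarrow> normed_scale (shift_scale S)"
  unfolding normed_scale_def by simp

lemma normed_scale_prod_const:
  fixes W :: "'w::real_vector scale"
  assumes "normed_scale W"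
  shows "normed_scale (prod_scale (const_scale :: 'v::real_normed_vector scale) W)"
proof -
  interpret W: normed_scale W by fact
  show ?thesis
  proof
    fix m
    show "subspace (lev (prod_scale (const_scale :: 'v scale) W) m)"
      using W.lev_subspace[of m] by (auto simp: subspace_def zero_prod_def)
    show "lev (prod_scale (const_scale :: 'v scale) W) (Suc m) \<subseteq> lev (prod_scale const_scale W) m"
      using W.lev_Suc_subset by auto
  next
    fix m and x y :: "'v \<times> 'w"
    assume x: "x \<in> lev (prod_scale const_scale W) m"
    then have wx: "snd x \<in> lev W m" by (auto simp: mem_Times_iff)
    show "0 \<le> nrm (prod_scale const_scale W) m x" by (simp add: nrm_prod_scale)
    show "nrm (prod_scale const_scale W) m x = 0 \<longleftrightarrow> x = 0"
      using W.nrm_nonneg[OF wx] W.nrm_eq_0_iff[OF wx]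
      by (cases x) (auto simp: nrm_prod_scale zero_prod_def)
    show "nrm (prod_scale const_scale W) m (c *\<^sub>R x) = \<bar>c\<bar> * nrm (prod_scale const_scale W) m x" for c
      using W.nrm_scaleR[OF wx, of c]
      by (simp add: nrm_prod_scale power_mult_distrib real_sqrt_mult distrib_left[symmetric])
    assume "y \<in> lev (prod_scale const_scale W) m"
    then have wy: "snd y \<in> lev W m" by (auto simp: mem_Times_iff)
    have "sqrt ((norm (fst x + fst y))\<^sup>2 + (nrm W m (snd x + snd y))\<^sup>2)
        \<le> sqrt ((norm (fst x) + norm (fst y))\<^sup>2 + (nrm W m (snd x) + nrm W m (snd y))\<^sup>2)"
      using W.nrm_triangle[OF wx wy] W.nrm_nonneg W.add_mem[OF wx wy]
      by (intro real_sqrt_le_mono add_mono power_mono norm_triangle_ineq) auto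
    also have "\<dots> \<le> nrm (prod_scale const_scale W) m x + nrm (prod_scale const_scale W) m y"
      unfolding nrm_prod_scale nrm_const_scale by (rule real_sqrt_sum_squares_triangle_ineq)
    finally show "nrm (prod_scale const_scale W) m (x + y)
        \<le> nrm (prod_scale const_scale W) m x + nrm (prod_scale const_scale W) m y"
      by (simp add: nrm_prod_scale)
  qed
qed

lemma nrm_prod_const_fst_le: "norm (fst p) \<le> nrm (prod_scale const_scale W) m p"
  by (simp add: nrm_prod_scale)

lemma nrm_prod_const_snd_le: "nrm W m (snd p) \<le> nrm (prod_scale const_scale W) m p"
  by (simp add: nrm_prod_scale)

lemma nrm_prod_const_le_add:
  "0 \<le> nrm W m (snd p) \<Longrightarrow> nrm (prod_scale const_scale W) m p \<le> norm (fst p) + nrm W m (snd p)"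
  using real_sqrt_sum_squares_triangle_ineq[of "norm (fst p)" 0 0 "nrm W m (snd p)"]
  by (simp add: nrm_prod_scale)

lemma nrm_prod_const_zero_fst: "0 \<le> nrm W m w \<Longrightarrow> nrm (prod_scale const_scale W) m (0, w) = nrm W m w"
  by (simp add: nrm_prod_scale)

lemma nrm_prod_const_zero_snd: "nrm W m 0 = 0 \<Longrightarrow> nrm (prod_scale const_scale W) m (v, 0) = norm v"
  by (simp add: nrm_prod_scale)

lemma normed_scale_tscale:
  assumes "normed_scale S"
  shows "normed_scale (tscale S j)"
proof -
  interpret S: normed_scale S by fact
  show ?thesis
  proof
    fix m
    show "subspace (lev (tscale S j) m)"
      unfolding subspace_def by (auto simp: lev_tscale intro: S.add_mem S.scaleR_mem)
    show "lev (tscale S j) (Suc m) \<subseteq> lev (tscale S j) m"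
      using S.lev_antimono[of "m + tsh j i" "Suc m + tsh j i" for i] by (fastforce simp: lev_tscale)
  next
    fix m x y
    assume x: "x \<in> lev (tscale S j) m"
    then have xi: "\<And>i. i \<in> {..<2^j} \<Longrightarrow> x i \<in> lev S (m + tsh j i)" by (simp add: lev_tscale)
    show "0 \<le> nrm (tscale S j) m x"
      unfolding nrm_tscale by (auto intro!: sum_nonneg S.nrm_nonneg xi)
    show "nrm (tscale S j) m x = 0 \<longleftrightarrow> x = 0"
    proof
      assume "nrm (tscale S j) m x = 0"
      then have "\<forall>i\<in>{..<2^j}. nrm S (m + tsh j i) (x i) = 0"
        unfolding nrm_tscale by (subst sum_nonneg_eq_0_iff[symmetric]) (auto intro!: S.nrm_nonneg xi)
      then show "x = 0"
        using x xi S.nrm_eq_0_iff by (auto simp: fun_eq_iff lev_tscale) (metis lessThan_iff not_le)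
    qed (simp add: nrm_tscale)
    show "nrm (tscale S j) m (c *\<^sub>R x) = \<bar>c\<bar> * nrm (tscale S j) m x" for c
      unfolding nrm_tscale by (simp add: sum_distrib_left S.nrm_scaleR xi)
    assume "y \<in> lev (tscale S j) m"
    then have "\<And>i. i \<in> {..<2^j} \<Longrightarrow> y i \<in> lev S (m + tsh j i)" by (simp add: lev_tscale)
    then show "nrm (tscale S j) m (x + y) \<le> nrm (tscale S j) m x + nrm (tscale S j) m y"
      unfolding nrm_tscale sum.distrib[symmetric] by (intro sum_mono) (simp add: S.nrm_triangle xi)
  qed
qed

definition levels_dense :: "'a::real_vector scale \<Rightarrow> bool" where
  "levels_dense S \<longleftrightarrow> (\<forall>k. \<forall>x\<in>lev S k. \<forall>e>0. \<exists>y\<in>lev S (Suc k). nrm S k (x - y) < e)"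

lemma levels_denseD:
  "levels_dense S \<Longrightarrow> x \<in> lev S k \<Longrightarrow> e > 0 \<Longrightarrow> \<exists>y\<in>lev S (Suc k). nrm S k (x - y) < e"
  unfolding levels_dense_def by blast

lemma levels_dense_prod_const:
  fixes W :: "'w::real_vector scale"
  assumes "normed_scale W" "levels_dense W"
  shows "levels_dense (prod_scale (const_scale :: 'v::real_normed_vector scale) W)"
  unfolding levels_dense_def
proof (intro allI ballI impI)
  fix k and x :: "'v \<times> 'w" and e :: real
  assume "x \<in> lev (prod_scale const_scale W) k" "e > 0"
  then have "snd x \<in> lev W k" by (auto simp: mem_Times_iff)
  then obtain y where y: "y \<in> lev W (Suc k)" "nrm W k (snd x - y) < e"
    using levels_denseD[OF assms(2) _ \<open>e > 0\<close>] by blast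
  have "y \<in> lev W k"
    using y normed_scale.lev_Suc_subset[OF assms(1)] by blast
  then have "0 \<le> nrm W k (snd x - y)"
    using \<open>x \<in> _\<close> normed_scale.nrm_nonneg[OF assms(1)] normed_scale.diff_mem[OF assms(1)]
    by (auto simp: mem_Times_iff)
  with y show "\<exists>y\<in>lev (prod_scale const_scale W) (Suc k). nrm (prod_scale const_scale W) k (x - y) < e"
    by (intro bexI[of _ "(fst x, y)"]) (auto simp: nrm_prod_scale)
qed

lemma levels_dense_tscale:
  assumes "levels_dense S"
  shows "levels_dense (tscale S j)"
  unfolding levels_dense_def
proof (intro allI ballI impI)
  fix k x and e :: real
  assume x: "x \<in> lev (tscale S j) k" and e: "e > 0"
  have "\<forall>i<2^j. \<exists>y\<in>lev S (Suc (k + tsh j i)). nrm S (k + tsh j i) (x i - y) < e / 2^j"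
    using x e levels_denseD[OF assms] by (simp add: lev_tscale)
  then obtain f where f: "\<And>i. i < 2^j \<Longrightarrow>
      f i \<in> lev S (Suc (k + tsh j i)) \<and> nrm S (k + tsh j i) (x i - f i) < e / 2^j"
    by metis
  define y where "y i = (if i < 2^j then f i else 0)" for i
  have "y \<in> lev (tscale S j) (Suc k)"
    unfolding lev_tscale y_def using f by auto
  moreover have "nrm (tscale S j) k (x - y) < (\<Sum>i<(2::nat)^j. e / 2^j)"
    unfolding nrm_tscale y_def using f by (intro sum_strict_mono) (auto simp: lessThan_empty_iff)
  ultimately show "\<exists>y\<in>lev (tscale S j) (Suc k). nrm (tscale S j) k (x - y) < e"
    by auto
qed

section \<open>sc-Banach spaces\<close>

context
  fixes W :: "'w::banach scale"
  assumes W: "sc_banach W"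
begin

lemma sc_banach_lev_0 [simp]: "lev W 0 = UNIV"
  using W by (simp add: sc_banach_def)

lemma sc_banach_nrm_0 [simp]: "nrm W 0 = norm"
  using W by (simp add: sc_banach_def fun_eq_iff)

lemma sc_banach_normed_scale: "normed_scale W"
proof -
  have "\<forall>m. subspace (lev W m)"
    using W unfolding sc_banach_def by (elim conjE) assumption
  moreover have "\<forall>m. lev W (Suc m) \<subseteq> lev W m"
    using W unfolding sc_banach_def by (elim conjE) assumption
  moreover have "\<forall>m. \<forall>x\<in>lev W m. \<forall>y\<in>lev W m. \<forall>c.
       0 \<le> nrm W m x \<and> (nrm W m x = 0 \<longleftrightarrow> x = 0) \<and>
       nrm W m (c *\<^sub>R x) = \<bar>c\<bar> * nrm W m x \<and> nrm W m (x + y) \<le> nrm W m x + nrm W m y"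
    using W unfolding sc_banach_def by (elim conjE) assumption
  ultimately show ?thesis
    by unfold_locales blast+
qed

lemma sc_banach_compact_inclusion:
  fixes X :: "nat \<Rightarrow> 'w"
  assumes "\<And>i. X i \<in> lev W (Suc m)" and "\<And>i. nrm W (Suc m) (X i) \<le> B"
  shows "\<exists>r x. strict_mono r \<and> x \<in> lev W m \<and> lconv W m (X \<circ> r) x"
proof -
  have "\<forall>m (X::nat \<Rightarrow> 'w). (\<forall>i. X i \<in> lev W (Suc m)) \<and> (\<exists>B. \<forall>i. nrm W (Suc m) (X i) \<le> B)
      \<longrightarrow> (\<exists>r x. strict_mono r \<and> x \<in> lev W m \<and> lconv W m (X \<circ> r) x)"
    using W unfolding sc_banach_def by (elim conjE) assumption
  from spec[OF spec[OF this, of m], of X] assms show ?thesis by blast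
qed

lemma sc_banach_levels_dense: "levels_dense W"
proof -
  have "\<forall>m. \<forall>x\<in>lev W m. \<forall>e>0. \<exists>y\<in>(\<Inter>k. lev W k). nrm W m (x - y) < e"
    using W unfolding sc_banach_def by (elim conjE) assumption
  then show ?thesis
    unfolding levels_dense_def by blast
qed

interpretation W: normed_scale W
  by (rule sc_banach_normed_scale)

text \<open>The inclusion $W_{m+1} \to W_m$ is bounded because it is compact: otherwise there is a
  sequence on the unit sphere of $W_{m+1}$ whose $W_m$-norms diverge, and no subsequence of it
  converges in $W_m$.\<close>
lemma sc_banach_inclusion_bounded: "\<exists>C\<ge>0. \<forall>x\<in>lev W (Suc m). nrm W m x \<le> C * nrm W (Suc m) x"
proof (rule ccontr)
  assume "\<not> ?thesis"
  then have "\<forall>C\<ge>0. \<exists>x\<in>lev W (Suc m). nrm W m x > C * nrm W (Suc m) x"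
    by (meson not_le)
  then have "\<forall>i::nat. \<exists>x\<in>lev W (Suc m). nrm W m x > real i * nrm W (Suc m) x"
    by auto
  then obtain X where X: "\<And>i. X i \<in> lev W (Suc m)" "\<And>i. nrm W m (X i) > real i * nrm W (Suc m) (X i)"
    by metis
  have lev_m: "lev W (Suc m) \<subseteq> lev W m"
    by (rule W.lev_Suc_subset)
  have pos: "nrm W (Suc m) (X i) > 0" for i
  proof -
    have "X i \<noteq> 0"
      using X(2)[of i] by auto
    then show ?thesis
      using X(1)[of i] W.nrm_nonneg W.nrm_eq_0_iff by (metis order.not_eq_order_implies_strict)
  qed
  define Y where "Y i = (1 / nrm W (Suc m) (X i)) *\<^sub>R X i" for i
  have Y: "Y i \<in> lev W (Suc m)" "nrm W (Suc m) (Y i) = 1" for i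
    unfolding Y_def using X(1) pos[of i] by (simp_all add: W.scaleR_mem W.nrm_scaleR)
  have Y_large: "nrm W m (Y i) > real i" for i
  proof -
    have "nrm W m (Y i) = nrm W m (X i) / nrm W (Suc m) (X i)"
      unfolding Y_def using pos[of i] X(1)[of i] lev_m by (auto simp: W.nrm_scaleR)
    then show ?thesis
      using X(2)[of i] pos[of i] by (simp add: pos_less_divide_eq)
  qed
  obtain r y where r: "strict_mono r" "y \<in> lev W m" "lconv W m (Y \<circ> r) y"
    using sc_banach_compact_inclusion[of Y m 1] Y by auto
  then obtain N where N: "\<And>i. i \<ge> N \<Longrightarrow> nrm W m (Y (r i) - y) < 1"
    unfolding lconv_def by force
  define i where "i = max N (nat \<lceil>1 + nrm W m y\<rceil>)"
  have "nrm W m (Y (r i)) \<le> nrm W m (Y (r i) - y) + nrm W m y"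
    using W.nrm_triangle[of "Y (r i) - y" m y] W.diff_mem[of "Y (r i)" m y] Y(1)[of "r i"] r(2) lev_m
    by auto
  also have "\<dots> < 1 + nrm W m y"
    using N[of i] by (simp add: i_def)
  also have "\<dots> \<le> real (r i)"
    using seq_suble[OF r(1), of i] unfolding i_def by linarith
  finally show False
    using Y_large[of "r i"] by simp
qed

lemma sc_banach_norm_le_nrm: "\<exists>C\<ge>0. \<forall>x\<in>lev W m. norm x \<le> C * nrm W m x"
proof (induction m)
  case 0
  show ?case by (intro exI[of _ 1]) simp
next
  case (Suc m)
  then obtain C where C: "C \<ge> 0" "\<forall>x\<in>lev W m. norm x \<le> C * nrm W m x"
    by blast
  obtain D where D: "D \<ge> 0" "\<forall>x\<in>lev W (Suc m). nrm W m x \<le> D * nrm W (Suc m) x"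
    using sc_banach_inclusion_bounded by blast
  have "norm x \<le> (C * D) * nrm W (Suc m) x" if "x \<in> lev W (Suc m)" for x
  proof -
    have "norm x \<le> C * nrm W m x"
      using C that W.lev_Suc_subset by blast
    also have "\<dots> \<le> C * (D * nrm W (Suc m) x)"
      using D that C(1) by (simp add: mult_left_mono)
    finally show ?thesis by (simp add: mult.assoc)
  qed
  then show ?case
    using C(1) D(1) by (intro exI[of _ "C * D"]) simp
qed

lemma sc_banach_bounded_linear_level_bound:
  assumes "bounded_linear c"
  shows "\<exists>C\<ge>0. \<forall>w\<in>lev W m. norm (c w) \<le> C * nrm W m w"
proof -
  obtain B where B: "B \<ge> 0" "\<And>w. norm (c w) \<le> B * norm w"
    using bounded_linear.nonneg_bounded[OF assms] by (auto simp: mult.commute)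
  obtain C where C: "C \<ge> 0" "\<forall>w\<in>lev W m. norm w \<le> C * nrm W m w"
    using sc_banach_norm_le_nrm by blast
  have "norm (c w) \<le> (B * C) * nrm W m w" if "w \<in> lev W m" for w
    using B(2)[of w] mult_left_mono[OF C(2)[rule_format, OF that] B(1)] by (simp add: mult.assoc)
  with B(1) C(1) show ?thesis
    by (intro exI[of _ "B * C"]) simp
qed

end

section \<open>Germs and sc-derivatives\<close>

lemma germ_nbhd_antimono:
  assumes "germ_nbhd E C U" "m \<le> k"
  shows "U k \<subseteq> U m"
  using assms(2) by (induction k rule: dec_induct) (use assms(1) in \<open>auto simp: germ_nbhd_def\<close>)

lemma germ_nbhd_subset: "germ_nbhd E C U \<Longrightarrow> U m \<subseteq> C \<inter> lev E m"
  unfolding germ_nbhd_def by blast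

lemma germ_nbhd_zero: "germ_nbhd E C U \<Longrightarrow> 0 \<in> U m"
  unfolding germ_nbhd_def by blast

lemma germ_nbhd_relopen:
  "germ_nbhd E C U \<Longrightarrow> x \<in> U m \<Longrightarrow> \<exists>d>0. \<forall>y\<in>C \<inter> lev E m. nrm E m (y - x) < d \<longrightarrow> y \<in> U m"
  unfolding germ_nbhd_def by blast

lemma germ_nbhd_eventually_segment:
  assumes "germ_nbhd E C U" and "normed_scale E"
    and "x \<in> U m" and "h \<in> lev E m" and "\<And>t. t \<in> {0<..<1} \<Longrightarrow> x + t *\<^sub>R h \<in> C"
  shows "\<forall>\<^sub>F t in at_right 0. x + t *\<^sub>R h \<in> U m"
proof -
  interpret E: normed_scale E by fact
  obtain d where d: "d > 0" "\<And>y. y \<in> C \<inter> lev E m \<Longrightarrow> nrm E m (y - x) < d \<Longrightarrow> y \<in> U m"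
    using germ_nbhd_relopen[OF assms(1,3)] by blast
  have "((\<lambda>t. t * nrm E m h) \<longlongrightarrow> 0) (at_right 0)"
    by (rule tendsto_eq_intros | simp)+
  then have "\<forall>\<^sub>F t in at_right 0. t * nrm E m h < d"
    using d(1) by (rule order_tendstoD)
  moreover have "\<forall>\<^sub>F t in at_right (0::real). t \<in> {0<..<1}"
    by (rule eventually_at_right_real) simp
  ultimately show ?thesis
  proof eventually_elim
    case (elim t)
    have "x \<in> lev E m"
      using assms(1,3) germ_nbhd_subset by blast
    then have "x + t *\<^sub>R h \<in> C \<inter> lev E m"
      using assms(4,5) elim E.add_mem E.scaleR_mem by blast
    moreover have "nrm E m ((x + t *\<^sub>R h) - x) < d"
      using elim assms(4) by (simp add: E.nrm_scaleR)
    ultimately show ?case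
      by (rule d(2))
  qed
qed

lemma tdom_antimono:
  assumes "normed_scale E" "germ_nbhd E C U" "m \<le> k"
  shows "tdom E U j k \<subseteq> tdom E U j m"
  using normed_scale.lev_antimono[OF normed_scale_tscale[OF assms(1)] assms(3)]
    germ_nbhd_antimono[OF assms(2), of "m + j" "k + j"] assms(3)
  unfolding tdom_def by auto

lemma zero_mem_tdom: "normed_scale E \<Longrightarrow> germ_nbhd E C U \<Longrightarrow> 0 \<in> tdom E U j m"
  using normed_scale.zero_mem[OF normed_scale_tscale] germ_nbhd_zero
  unfolding tdom_def by fastforce

definition lev0_bounded_linear :: "'a::real_vector scale \<Rightarrow> 'b::real_vector scale \<Rightarrow> ('a \<Rightarrow> 'b) \<Rightarrow> bool"
  where "lev0_bounded_linear E F L \<longleftrightarrow>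
    (\<forall>h\<in>lev E 0. L h \<in> lev F 0) \<and>
    (\<forall>h1\<in>lev E 0. \<forall>h2\<in>lev E 0. \<forall>c. L (h1 + h2) = L h1 + L h2 \<and> L (c *\<^sub>R h1) = c *\<^sub>R L h1) \<and>
    (\<exists>B. \<forall>h\<in>lev E 0. nrm F 0 (L h) \<le> B * nrm E 0 h)"

lemma sc_deriv_iff:
  "sc_deriv E F U g x L \<longleftrightarrow> lev0_bounded_linear E F L \<and>
     (\<forall>e>0. \<exists>d>0. \<forall>h. x + h \<in> U 1 \<and> nrm E 1 h < d \<longrightarrow>
        nrm F 0 (g (x + h) - g x - L h) \<le> e * nrm E 1 h)"
  unfolding sc_deriv_def lev0_bounded_linear_def by blast

lemma sc_derivD:
  assumes "sc_deriv E F U g x L"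
  shows "lev0_bounded_linear E F L"
    and "e > 0 \<Longrightarrow> \<exists>d>0. \<forall>h. x + h \<in> U 1 \<and> nrm E 1 h < d \<longrightarrow>
           nrm F 0 (g (x + h) - g x - L h) \<le> e * nrm E 1 h"
  using assms unfolding sc_deriv_iff by blast+

context
  fixes E :: "'a::real_vector scale" and F :: "'b::real_vector scale" and L :: "'a \<Rightarrow> 'b"
  assumes L: "lev0_bounded_linear E F L"
begin

lemma lev0_bounded_linear_mem: "h \<in> lev E 0 \<Longrightarrow> L h \<in> lev F 0"
  using L unfolding lev0_bounded_linear_def by blast

lemma lev0_bounded_linear_add:
  "h1 \<in> lev E 0 \<Longrightarrow> h2 \<in> lev E 0 \<Longrightarrow> L (h1 + h2) = L h1 + L h2"
  using L unfolding lev0_bounded_linear_def by blast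

lemma lev0_bounded_linear_scaleR: "h \<in> lev E 0 \<Longrightarrow> L (c *\<^sub>R h) = c *\<^sub>R L h"
  using L unfolding lev0_bounded_linear_def by blast

lemma lev0_bounded_linear_bound:
  assumes "normed_scale E"
  shows "\<exists>B\<ge>0. \<forall>h\<in>lev E 0. nrm F 0 (L h) \<le> B * nrm E 0 h"
proof -
  obtain B where "\<forall>h\<in>lev E 0. nrm F 0 (L h) \<le> B * nrm E 0 h"
    using L unfolding lev0_bounded_linear_def by blast
  then show ?thesis
    using normed_scale.nrm_nonneg[OF assms] by (rule nonneg_bound_if_bound)
qed

end

lemma lev0_bounded_linear_eq_if_eq_on_lev1:
  assumes E: "normed_scale E" "levels_dense E" and F: "normed_scale F"
    and L1: "lev0_bounded_linear E F L1" and L2: "lev0_bounded_linear E F L2"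
    and eq: "\<And>h. h \<in> lev E 1 \<Longrightarrow> L1 h = L2 h"
    and h: "h \<in> lev E 0"
  shows "L1 h = L2 h"
proof -
  interpret E: normed_scale E by fact
  interpret F: normed_scale F by fact
  obtain B1 where B1: "B1 \<ge> 0" "\<forall>h\<in>lev E 0. nrm F 0 (L1 h) \<le> B1 * nrm E 0 h"
    using lev0_bounded_linear_bound[OF L1 E(1)] by blast
  obtain B2 where B2: "B2 \<ge> 0" "\<forall>h\<in>lev E 0. nrm F 0 (L2 h) \<le> B2 * nrm E 0 h"
    using lev0_bounded_linear_bound[OF L2 E(1)] by blast
  have diff: "L1 h - L2 h \<in> lev F 0"
    using lev0_bounded_linear_mem[OF L1 h] lev0_bounded_linear_mem[OF L2 h] by (rule F.diff_mem)
  have "L1 h - L2 h = 0"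
  proof (rule F.eq_0_if_nrm_le_eps_mult[OF diff])
    fix e :: real assume "e > 0"
    then obtain h' where h': "h' \<in> lev E 1" "nrm E 0 (h - h') < e"
      using levels_denseD[OF E(2) h] by auto
    have h'0: "h' \<in> lev E 0"
      using h'(1) E.lev_Suc_subset[of 0] by auto
    have d: "h - h' \<in> lev E 0"
      using h h'0 by (rule E.diff_mem)
    have "L1 h - L2 h = L1 (h - h') - L2 (h - h')"
      using lev0_bounded_linear_add[OF L1 d h'0] lev0_bounded_linear_add[OF L2 d h'0] eq[OF h'(1)]
      by simp
    then have "nrm F 0 (L1 h - L2 h) \<le> nrm F 0 (L1 (h - h')) + nrm F 0 (L2 (h - h'))"
      using F.nrm_triangle_diff[OF lev0_bounded_linear_mem[OF L1 d] lev0_bounded_linear_mem[OF L2 d]]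
      by simp
    also have "\<dots> \<le> B1 * nrm E 0 (h - h') + B2 * nrm E 0 (h - h')"
      using B1(2) B2(2) d by (intro add_mono) auto
    also have "\<dots> \<le> B1 * e + B2 * e"
      using h'(2) B1(1) B2(1) by (intro add_mono mult_left_mono) auto
    finally show "nrm F 0 (L1 h - L2 h) \<le> e * (B1 + B2)"
      by (simp add: algebra_simps)
  qed
  then show ?thesis by simp
qed

lemma sc_deriv_along:
  assumes E: "normed_scale E" and D: "sc_deriv E F V f x L"
    and h: "h \<in> lev E 1" and ev: "\<forall>\<^sub>F t in at_right 0. x + t *\<^sub>R h \<in> V 1" and e: "e > 0"
  shows "\<forall>\<^sub>F t in at_right 0. nrm F 0 (f (x + t *\<^sub>R h) - f x - t *\<^sub>R L h) \<le> e * (t * nrm E 1 h)"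
proof -
  interpret E: normed_scale E by fact
  obtain d where d: "d > 0" "\<And>h. x + h \<in> V 1 \<Longrightarrow> nrm E 1 h < d \<Longrightarrow>
      nrm F 0 (f (x + h) - f x - L h) \<le> e * nrm E 1 h"
    using sc_derivD(2)[OF D e] by blast
  have "((\<lambda>t. t * nrm E 1 h) \<longlongrightarrow> 0) (at_right 0)"
    by (rule tendsto_eq_intros | simp)+
  then have "\<forall>\<^sub>F t in at_right 0. t * nrm E 1 h < d"
    using d(1) by (rule order_tendstoD)
  moreover have "\<forall>\<^sub>F t in at_right (0::real). t > 0"
    by (simp add: eventually_at_right_less)
  ultimately show ?thesis
    using ev
  proof eventually_elim
    case (elim t)
    have h0: "h \<in> lev E 0"
      using h E.lev_Suc_subset[of 0] by auto
    then have "L (t *\<^sub>R h) = t *\<^sub>R L h"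
      by (rule lev0_bounded_linear_scaleR[OF sc_derivD(1)[OF D]])
    with d(2)[of "t *\<^sub>R h"] elim E.nrm_scaleR[OF h, of t] show ?case
      by simp
  qed
qed

text \<open>Two sc-derivatives agree on every direction $h \in E_1$ along which small steps stay in the
  domain: their difference at $t h$ is $o(t)$ and homogeneous of degree one.\<close>
lemma sc_deriv_unique_along:
  assumes E: "normed_scale E" and F: "normed_scale F"
    and D1: "sc_deriv E F V f x L1" and D2: "sc_deriv E F V f x L2"
    and f: "\<And>y. y \<in> V 1 \<Longrightarrow> f y \<in> lev F 0"
    and x: "x \<in> V 1" and h: "h \<in> lev E 1"
    and ev: "\<forall>\<^sub>F t in at_right 0. x + t *\<^sub>R h \<in> V 1"
  shows "L1 h = L2 h"
proof -
  interpret E: normed_scale E by fact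
  interpret F: normed_scale F by fact
  note B1 = sc_derivD(1)[OF D1] and B2 = sc_derivD(1)[OF D2]
  have h0: "h \<in> lev E 0"
    using h E.lev_Suc_subset[of 0] by auto
  have diff: "L1 h - L2 h \<in> lev F 0"
    using lev0_bounded_linear_mem[OF B1 h0] lev0_bounded_linear_mem[OF B2 h0] by (rule F.diff_mem)
  have "L1 h - L2 h = 0"
  proof (rule F.eq_0_if_nrm_le_eps_mult[OF diff])
    fix e :: real assume e: "e > 0"
    have ev_t: "\<forall>\<^sub>F t in at_right 0. t > 0 \<and> x + t *\<^sub>R h \<in> V 1 \<and>
        nrm F 0 (f (x + t *\<^sub>R h) - f x - t *\<^sub>R L1 h) \<le> e * (t * nrm E 1 h) \<and>
        nrm F 0 (f (x + t *\<^sub>R h) - f x - t *\<^sub>R L2 h) \<le> e * (t * nrm E 1 h)"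
      by (intro eventually_conj ev sc_deriv_along[OF E D1 h ev e] sc_deriv_along[OF E D2 h ev e])
        (simp add: eventually_at_right_less)
    obtain t where t: "t > 0" "x + t *\<^sub>R h \<in> V 1"
      and r1: "nrm F 0 (f (x + t *\<^sub>R h) - f x - t *\<^sub>R L1 h) \<le> e * (t * nrm E 1 h)"
      and r2: "nrm F 0 (f (x + t *\<^sub>R h) - f x - t *\<^sub>R L2 h) \<le> e * (t * nrm E 1 h)"
      using eventually_happens[OF ev_t] by auto
    have fx: "f (x + t *\<^sub>R h) - f x \<in> lev F 0"
      using f[OF t(2)] f[OF x] by (rule F.diff_mem)
    have Lh: "t *\<^sub>R L1 h \<in> lev F 0" "t *\<^sub>R L2 h \<in> lev F 0"
      using lev0_bounded_linear_mem[OF B1 h0] lev0_bounded_linear_mem[OF B2 h0] by (simp_all add: F.scaleR_mem)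
    have "(f (x + t *\<^sub>R h) - f x - t *\<^sub>R L2 h) - (f (x + t *\<^sub>R h) - f x - t *\<^sub>R L1 h) =
        t *\<^sub>R (L1 h - L2 h)"
      by (simp add: algebra_simps)
    then have "t * nrm F 0 (L1 h - L2 h) =
        nrm F 0 ((f (x + t *\<^sub>R h) - f x - t *\<^sub>R L2 h) - (f (x + t *\<^sub>R h) - f x - t *\<^sub>R L1 h))"
      using t(1) F.nrm_scaleR[OF diff, of t] by simp
    also have "\<dots> \<le> e * (t * nrm E 1 h) + e * (t * nrm E 1 h)"
      using F.nrm_triangle_diff[OF F.diff_mem[OF fx Lh(2)] F.diff_mem[OF fx Lh(1)]] r1 r2 by linarith
    finally show "nrm F 0 (L1 h - L2 h) \<le> e * (2 * nrm E 1 h)"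
      using t(1) by (simp add: algebra_simps)
  qed
  then show ?thesis by simp
qed

section \<open>sc-operators, affine maps and their tangent maps\<close>

context
  fixes E :: "'a::real_vector scale" and F :: "'b::real_vector scale" and T :: "'a \<Rightarrow> 'b"
  assumes T: "sc_operator E F T"
begin

lemma sc_operator_mem: "x \<in> lev E m \<Longrightarrow> T x \<in> lev F m"
  using T unfolding sc_operator_def by blast

lemma sc_operator_add: "x \<in> lev E 0 \<Longrightarrow> y \<in> lev E 0 \<Longrightarrow> T (x + y) = T x + T y"
  using T unfolding sc_operator_def by blast

lemma sc_operator_scaleR: "x \<in> lev E 0 \<Longrightarrow> T (c *\<^sub>R x) = c *\<^sub>R T x"
  using T unfolding sc_operator_def by blast

lemma sc_operator_bound:
  assumes "normed_scale E"
  shows "\<exists>B\<ge>0. \<forall>x\<in>lev E m. nrm F m (T x) \<le> B * nrm E m x"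
proof -
  obtain B where "\<forall>x\<in>lev E m. nrm F m (T x) \<le> B * nrm E m x"
    using T unfolding sc_operator_def by blast
  then show ?thesis
    using normed_scale.nrm_nonneg[OF assms] by (rule nonneg_bound_if_bound)
qed

lemma sc_operator_lev0_bounded_linear: "lev0_bounded_linear E F T"
  using T unfolding sc_operator_def lev0_bounded_linear_def by blast

end

lemma sc0_affine:
  assumes E: "normed_scale E" and F: "normed_scale F"
    and c: "\<And>m. c \<in> lev F m" and T: "sc_operator E F T" and V: "\<And>m. V m \<subseteq> lev E m"
  shows "sc0 E F V (\<lambda>x. c + T x)"
  unfolding sc0_def
proof (intro allI conjI ballI impI)
  interpret E: normed_scale E by fact
  interpret F: normed_scale F by fact
  fix m
  have "c + T x \<in> lev F m" if "x \<in> V m" for x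
    using F.add_mem[OF c sc_operator_mem[OF T subsetD[OF V that]]] .
  then show "(\<lambda>x. c + T x) ` V m \<subseteq> lev F m"
    by blast
  obtain K where K: "K \<ge> 0" "\<forall>x\<in>lev E m. nrm F m (T x) \<le> K * nrm E m x"
    using sc_operator_bound[OF T E] by blast
  fix x and e :: real assume x: "x \<in> V m" and e: "e > 0"
  show "\<exists>d>0. \<forall>y\<in>V m. nrm E m (y - x) < d \<longrightarrow> nrm F m (c + T y - (c + T x)) < e"
  proof (intro exI[of _ "e / (K + 1)"] conjI ballI impI)
    show "e / (K + 1) > 0"
      using e K by simp
    fix y assume y: "y \<in> V m" and yx: "nrm E m (y - x) < e / (K + 1)"
    have x0: "x \<in> lev E 0" and yx0: "y - x \<in> lev E 0" and yxm: "y - x \<in> lev E m"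
      using x y V E.lev_antimono[of 0 m] by (auto intro: E.diff_mem)
    have "c + T y - (c + T x) = T (y - x)"
      using sc_operator_add[OF T yx0 x0] by simp
    also have "nrm F m (T (y - x)) \<le> K * nrm E m (y - x)"
      using K(2) yxm by blast
    also have "\<dots> \<le> K * (e / (K + 1))"
      using yx K by (intro mult_left_mono) auto
    also have "\<dots> < e"
      using e K by (simp add: field_simps)
    finally show "nrm F m (c + T y - (c + T x)) < e" .
  qed
qed

lemma sc_deriv_affine:
  assumes E: "normed_scale E" and F: "normed_scale F"
    and T: "sc_operator E F T" and V: "V 1 \<subseteq> lev E 1" and x: "x \<in> V 1"
  shows "sc_deriv E F V (\<lambda>y. c + T y) x T"
  unfolding sc_deriv_iff
proof (intro conjI allI impI sc_operator_lev0_bounded_linear[OF T])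
  interpret E: normed_scale E by fact
  interpret F: normed_scale F by fact
  fix e :: real assume "e > 0"
  show "\<exists>d>0. \<forall>h. x + h \<in> V 1 \<and> nrm E 1 h < d \<longrightarrow>
      nrm F 0 (c + T (x + h) - (c + T x) - T h) \<le> e * nrm E 1 h"
  proof (intro exI[of _ 1] conjI allI impI)
    fix h assume "x + h \<in> V 1 \<and> nrm E 1 h < 1"
    then have "(x + h) - x \<in> lev E 1"
      using V x E.diff_mem by blast
    then have h: "h \<in> lev E 1" by simp
    then have "T (x + h) = T x + T h"
      using x V E.lev_Suc_subset[of 0] by (intro sc_operator_add[OF T]) auto
    then show "nrm F 0 (c + T (x + h) - (c + T x) - T h) \<le> e * nrm E 1 h"
      using \<open>e > 0\<close> E.nrm_nonneg[OF h] by simp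
  qed simp
qed

definition tuple_at :: "nat \<Rightarrow> 'a::zero \<Rightarrow> nat \<Rightarrow> 'a" where
  "tuple_at k x = (\<lambda>i. if i = k then x else 0)"

text \<open>The tangent map $T^j l$ of a linear map $l$, acting componentwise on $2^j$-tuples.\<close>
definition tuple_map :: "('a \<Rightarrow> 'b::zero) \<Rightarrow> nat \<Rightarrow> (nat \<Rightarrow> 'a) \<Rightarrow> nat \<Rightarrow> 'b" where
  "tuple_map l j x = (\<lambda>i. if i < 2^j then l (x i) else 0)"

lemma tuple_at_same [simp]: "tuple_at k x k = x"
  by (simp add: tuple_at_def)

lemma tuple_at_other [simp]: "i \<noteq> k \<Longrightarrow> tuple_at k x i = 0"
  by (simp add: tuple_at_def)

lemma tuple_at_zero [simp]: "tuple_at k 0 = 0"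
  by (simp add: tuple_at_def fun_eq_iff)

lemma tuple_at_mem_tscale:
  assumes "normed_scale S" "k < 2^j" "x \<in> lev S (m + tsh j k)"
  shows "tuple_at k x \<in> lev (tscale S j) m"
  using assms normed_scale.zero_mem[OF assms(1)] by (auto simp: lev_tscale tuple_at_def)

lemma nrm_tscale_tuple_at:
  assumes "normed_scale S" "k < 2^j"
  shows "nrm (tscale S j) m (tuple_at k x) = nrm S (m + tsh j k) x"
proof -
  have "nrm (tscale S j) m (tuple_at k x) = (\<Sum>i\<in>{k}. nrm S (m + tsh j i) x)"
    unfolding nrm_tscale tuple_at_def using assms(2)
    by (intro sum.mono_neutral_cong_right) (auto simp: normed_scale.nrm_zero[OF assms(1)])
  then show ?thesis by simp
qed

lemma nrm_tscale_tuple_map_le: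
  assumes "\<And>i y. i < 2^j \<Longrightarrow> y \<in> lev E (m + tsh j i) \<Longrightarrow> nrm F (m + tsh j i) (T y) \<le> K * nrm E (m + tsh j i) y"
    and "x \<in> lev (tscale E j) m"
  shows "nrm (tscale F j) m (tuple_map T j x) \<le> K * nrm (tscale E j) m x"
proof -
  have "(\<Sum>i<2^j. nrm F (m + tsh j i) (T (x i))) \<le> (\<Sum>i<2^j. K * nrm E (m + tsh j i) (x i))"
    using assms by (intro sum_mono) (simp add: lev_tscale)
  then show ?thesis
    by (simp add: nrm_tscale tuple_map_def sum_distrib_left)
qed

lemma sc_operator_tuple_map:
  assumes E: "normed_scale E" and T: "sc_operator E F T"
  shows "sc_operator (tscale E j) (tscale F j) (tuple_map T j)"
  unfolding sc_operator_def
proof (intro conjI ballI allI)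
  interpret E: normed_scale E by fact
  have lev0: "x i \<in> lev E 0" if "x \<in> lev (tscale E j) 0" "i < 2^j" for x i
    using that E.lev_antimono[of 0 "tsh j i"] by (auto simp: lev_tscale)
  fix x y assume x: "x \<in> lev (tscale E j) 0" and y: "y \<in> lev (tscale E j) 0"
  show "tuple_map T j (x + y) = tuple_map T j x + tuple_map T j y"
    using lev0[OF x] lev0[OF y] by (auto simp: fun_eq_iff tuple_map_def sc_operator_add[OF T])
  show "tuple_map T j (c *\<^sub>R x) = c *\<^sub>R tuple_map T j x" for c
    using lev0[OF x] by (auto simp: fun_eq_iff tuple_map_def sc_operator_scaleR[OF T])
next
  fix m x assume "x \<in> lev (tscale E j) m"
  then show "tuple_map T j x \<in> lev (tscale F j) m"
    by (auto simp: lev_tscale tuple_map_def sc_operator_mem[OF T])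
next
  fix m
  have "\<forall>k. \<exists>B\<ge>0. \<forall>x\<in>lev E k. nrm F k (T x) \<le> B * nrm E k x"
    using sc_operator_bound[OF T E] by blast
  then obtain B where B: "\<And>k. B k \<ge> 0" "\<And>k x. x \<in> lev E k \<Longrightarrow> nrm F k (T x) \<le> B k * nrm E k x"
    by metis
  define K where "K = (\<Sum>i<2^j. B (m + tsh j i))"
  have "nrm F (m + tsh j i) (T y) \<le> K * nrm E (m + tsh j i) y" if "i < 2^j" "y \<in> lev E (m + tsh j i)" for i y
  proof -
    have "B (m + tsh j i) \<le> K"
      unfolding K_def using that(1) B(1) by (intro member_le_sum) auto
    then show ?thesis
      using B(2)[OF that(2)] normed_scale.nrm_nonneg[OF E that(2)] by (meson mult_right_mono order_trans)
  qed
  then show "\<exists>K. \<forall>x\<in>lev (tscale E j) m. nrm (tscale F j) m (tuple_map T j x) \<le> K * nrm (tscale E j) m x"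
    using nrm_tscale_tuple_map_le by blast
qed

lemma sc0_cong: "(\<And>m x. x \<in> V m \<Longrightarrow> f x = g x) \<Longrightarrow> sc0 E F V f \<longleftrightarrow> sc0 E F V g"
  unfolding sc0_def by (metis (no_types, lifting) image_cong)

lemma sc_deriv_cong:
  "(\<And>y. y \<in> V 1 \<Longrightarrow> f y = g y) \<Longrightarrow> x \<in> V 1 \<Longrightarrow> sc_deriv E F V f x L \<longleftrightarrow> sc_deriv E F V g x L"
  unfolding sc_deriv_def by simp

lemma lowhalf_mem_tdom: "x \<in> tdom E U (Suc j) 0 \<Longrightarrow> lowhalf j x \<in> tdom E U j 1"
proof -
  assume x: "x \<in> tdom E U (Suc j) 0"
  have "x i \<in> lev E (Suc (tsh j i))" if "i < 2^j" for i
    using x that by (auto simp: tdom_def lev_tscale dest: spec[of _ i])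
  with x show ?thesis
    by (simp add: tdom_def lev_tscale lowhalf_def)
qed

lemma highhalf_mem_tscale: "x \<in> tdom E U (Suc j) 0 \<Longrightarrow> highhalf j x \<in> lev (tscale E j) 0"
proof -
  assume x: "x \<in> tdom E U (Suc j) 0"
  have "x (i + 2^j) \<in> lev E (tsh j i)" if "i < 2^j" for i
    using x that by (auto simp: tdom_def lev_tscale dest: spec[of _ "i + 2^j"])
  then show ?thesis
    by (simp add: lev_tscale highhalf_def)
qed

section \<open>The graph operator\<close>

lemma lclosed_zero_set:
  fixes \<phi> :: "'a::real_vector \<Rightarrow> 'b::real_normed_vector"
  assumes E: "normed_scale E"
    and Lip: "\<And>p q. p \<in> lev E m \<Longrightarrow> q \<in> lev E m \<Longrightarrow> norm (\<phi> p - \<phi> q) \<le> K * nrm E m (p - q)"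
  shows "lclosed E m ({p. \<phi> p = 0} \<inter> lev E m)"
  unfolding lclosed_def
proof (intro allI impI)
  interpret E: normed_scale E by fact
  fix X x assume "(\<forall>i. X i \<in> {p. \<phi> p = 0} \<inter> lev E m) \<and> x \<in> lev E m \<and> lconv E m X x"
  then have X: "\<And>i. \<phi> (X i) = 0" "\<And>i. X i \<in> lev E m" and x: "x \<in> lev E m" and "lconv E m X x"
    by auto
  have "norm (\<phi> x) \<le> 0"
  proof (rule nonpos_if_le_eps_mult)
    fix e :: real assume "e > 0"
    then obtain i where i: "nrm E m (X i - x) < e"
      using \<open>lconv E m X x\<close> unfolding lconv_def by blast
    have "norm (\<phi> x) = norm (\<phi> x - \<phi> (X i))"
      using X(1) by simp
    also have "\<dots> \<le> \<bar>K\<bar> * nrm E m (X i - x)"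
      using Lip[OF x X(2)] E.nrm_minus_commute[OF x X(2)] E.nrm_nonneg[OF E.diff_mem[OF x X(2)]]
      by (smt (verit) mult_right_mono abs_ge_self)
    also have "\<dots> \<le> e * \<bar>K\<bar>"
      using i by (simp add: mult.commute[of _ "\<bar>K\<bar>"] mult_left_mono)
    finally show "norm (\<phi> x) \<le> e * \<bar>K\<bar>" .
  qed
  with x show "x \<in> {p. \<phi> p = 0} \<inter> lev E m"
    by simp
qed

lemma dim_snd_eq_0: "dim {p :: (real ^ 'n) \<times> 'w::real_vector. snd p = 0} = CARD('n)"
proof -
  have "{p :: (real ^ 'n) \<times> 'w. snd p = 0} = (\<lambda>v. (v, 0)) ` UNIV"
    by force
  moreover have "linear (\<lambda>v::real ^ 'n. (v, 0::'w))"
    by (rule linearI) auto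
  then have "dim ((\<lambda>v. (v, 0::'w)) ` (UNIV :: (real ^ 'n) set)) = dim (UNIV :: (real ^ 'n) set)"
    by (intro dim_image_eq) (auto simp: inj_on_def)
  ultimately show ?thesis
    by simp
qed

lemma findim_snd_eq_0: "findim {p :: (real ^ 'n) \<times> 'w::real_vector. snd p = 0}"
proof -
  have "linear (\<lambda>v::real ^ 'n. (v, 0::'w))"
    by (rule linearI) auto
  then have "span ((\<lambda>v. (v, 0::'w)) ` Basis) = (\<lambda>v. (v, 0)) ` span (Basis :: (real ^ 'n) set)"
    by (rule span_linear_image)
  also have "\<dots> = {p. snd p = 0}"
    by (force simp: span_Basis)
  finally show ?thesis
    unfolding findim_def by (intro exI[of _ "(\<lambda>v. (v, 0::'w)) ` Basis"]) auto
qed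

context
  fixes W :: "'w::banach scale"
  assumes W: "sc_banach W"
begin

interpretation W: normed_scale W
  by (rule sc_banach_normed_scale[OF W])

lemma lclosed_snd_eq_0:
  "lclosed (prod_scale (const_scale :: 'v::real_normed_vector scale) W) m
     ({p. snd p = 0} \<inter> lev (prod_scale const_scale W) m)"
proof -
  obtain C where C: "C \<ge> 0" "\<forall>w\<in>lev W m. norm w \<le> C * nrm W m w"
    using sc_banach_norm_le_nrm[OF W] by blast
  have "norm (snd p - snd q) \<le> C * nrm (prod_scale const_scale W) m (p - q)"
    if "p \<in> lev (prod_scale const_scale W) m" "q \<in> lev (prod_scale const_scale W) m" for p q :: "'v \<times> 'w"
  proof -
    have "snd (p - q) \<in> lev W m"
      using that by (auto simp: mem_Times_iff intro: W.diff_mem)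
    then have "norm (snd (p - q)) \<le> C * nrm W m (snd (p - q))"
      using C(2) by blast
    also have "\<dots> \<le> C * nrm (prod_scale const_scale W) m (p - q)"
      using C(1) by (intro mult_left_mono nrm_prod_const_snd_le)
    finally show ?thesis
      by simp
  qed
  then show ?thesis
    by (rule lclosed_zero_set[OF normed_scale_prod_const[OF W.normed_scale_axioms]])
qed

lemma sc_splitting_snd_fst:
  "sc_splitting (prod_scale (const_scale :: 'v::real_normed_vector scale) W) {p. snd p = 0} {p. fst p = 0}"
  unfolding sc_splitting_def
proof (intro conjI allI ballI)
  let ?E = "prod_scale (const_scale :: 'v scale) W"
  interpret E: normed_scale ?E
    by (rule normed_scale_prod_const[OF sc_banach_normed_scale[OF W]])
  show "subspace {p :: 'v \<times> 'w. snd p = 0}" "subspace {p :: 'v \<times> 'w. fst p = 0}"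
    by (auto simp: subspace_def)
  show "{p. snd p = 0} \<subseteq> lev ?E 0" "{p. fst p = 0} \<subseteq> lev ?E 0" "{p. snd p = 0} \<inter> {p. fst p = 0} = {0}"
    by (auto simp: prod_eq_iff sc_banach_lev_0[OF W])
  fix m
  show "\<exists>a\<in>{p. snd p = 0} \<inter> lev ?E m. \<exists>b\<in>{p. fst p = 0} \<inter> lev ?E m. x = a + b" if "x \<in> lev ?E m" for x
    using that by (intro bexI[of _ "(fst x, 0)"] bexI[of _ "(0, snd x)"]) (auto simp: mem_Times_iff)
  show "lclosed ?E m ({p. snd p = 0} \<inter> lev ?E m)"
    by (rule lclosed_snd_eq_0)
  have "norm (fst p - fst q) \<le> 1 * nrm ?E m (p - q)" for p q :: "'v \<times> 'w"
    using nrm_prod_const_fst_le[of "p - q" W m] by simp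
  then show "lclosed ?E m ({p. fst p = 0} \<inter> lev ?E m)"
    by (rule lclosed_zero_set[OF E.normed_scale_axioms])
  have "nrm ?E m a \<le> 1 * nrm ?E m (a + b) \<and> nrm ?E m b \<le> 1 * nrm ?E m (a + b)"
    if a: "a \<in> {p. snd p = 0} \<inter> lev ?E m" and b: "b \<in> {p. fst p = 0} \<inter> lev ?E m" for a b
  proof -
    obtain v w where ab: "a = (v, 0)" "b = (0, w)" and w: "w \<in> lev W m"
      using a b by (auto simp: mem_Times_iff prod_eq_iff)
    show ?thesis
      using nrm_prod_const_fst_le[of "(v, w)" W m] nrm_prod_const_snd_le[of W m "(v, w)"]
      by (simp add: ab nrm_prod_const_zero_fst nrm_prod_const_zero_snd W.nrm_nonneg[OF w])
  qed
  then show "\<exists>K. \<forall>a\<in>{p. snd p = 0} \<inter> lev ?E m. \<forall>b\<in>{p. fst p = 0} \<inter> lev ?E m.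
      nrm ?E m a \<le> K * nrm ?E m (a + b) \<and> nrm ?E m b \<le> K * nrm ?E m (a + b)"
    by blast
qed

context
  fixes c :: "'w \<Rightarrow> 'v::real_normed_vector"
  assumes c: "bounded_linear c"
begin

lemma graph_nrm_bound:
  "\<exists>K\<ge>1. \<forall>w\<in>lev W m. norm (c w) \<le> K * nrm W m w \<and>
     nrm (prod_scale const_scale W) m (c w, w) \<le> K * nrm W m w"
proof -
  obtain C where C: "C \<ge> 0" "\<forall>w\<in>lev W m. norm (c w) \<le> C * nrm W m w"
    using sc_banach_bounded_linear_level_bound[OF W c] by blast
  have "norm (c w) \<le> (C + 1) * nrm W m w \<and> nrm (prod_scale const_scale W) m (c w, w) \<le> (C + 1) * nrm W m w"
    if w: "w \<in> lev W m" for w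
  proof
    show "norm (c w) \<le> (C + 1) * nrm W m w"
      using C(2) w W.nrm_nonneg[OF w] by (fastforce simp: distrib_right)
    have "nrm (prod_scale const_scale W) m (c w, w) \<le> norm (c w) + nrm W m w"
      using nrm_prod_const_le_add[of W m "(c w, w)"] W.nrm_nonneg[OF w] by simp
    also have "\<dots> \<le> (C + 1) * nrm W m w"
      using C(2) w by (simp add: distrib_right)
    finally show "nrm (prod_scale const_scale W) m (c w, w) \<le> (C + 1) * nrm W m w" .
  qed
  with C(1) show ?thesis
    by (intro exI[of _ "C + 1"]) simp
qed

lemma lclosed_graph:
  "lclosed (prod_scale (const_scale :: 'v scale) W) m
     ({p. fst p = c (snd p)} \<inter> lev (prod_scale const_scale W) m)"
proof -
  let ?F = "prod_scale (const_scale :: 'v scale) W"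
  note lin = bounded_linear.linear[OF c]
  obtain K where K: "K \<ge> 1" "\<And>w. w \<in> lev W m \<Longrightarrow> norm (c w) \<le> K * nrm W m w"
    using graph_nrm_bound by blast
  have "norm ((fst p - c (snd p)) - (fst q - c (snd q))) \<le> (K + 1) * nrm ?F m (p - q)"
    if "p \<in> lev ?F m" "q \<in> lev ?F m" for p q
  proof -
    have pq: "snd (p - q) \<in> lev W m"
      using that by (auto simp: mem_Times_iff intro: W.diff_mem)
    have "norm ((fst p - c (snd p)) - (fst q - c (snd q))) = norm (fst (p - q) - c (snd (p - q)))"
      by (simp add: linear_diff[OF lin] algebra_simps)
    also have "\<dots> \<le> norm (fst (p - q)) + norm (c (snd (p - q)))"
      by (rule norm_triangle_ineq4)
    also have "\<dots> \<le> nrm ?F m (p - q) + K * nrm ?F m (p - q)"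
    proof (rule add_mono[OF nrm_prod_const_fst_le])
      show "norm (c (snd (p - q))) \<le> K * nrm ?F m (p - q)"
        using K(2)[OF pq] mult_left_mono[OF nrm_prod_const_snd_le[of W m "p - q"], of K] K(1)
        by linarith
    qed
    finally show ?thesis
      by (simp add: algebra_simps)
  qed
  then have "lclosed ?F m ({p. fst p - c (snd p) = 0} \<inter> lev ?F m)"
    by (rule lclosed_zero_set[OF normed_scale_prod_const[OF W.normed_scale_axioms]])
  then show ?thesis
    by simp
qed

lemma graph_projections_bounded:
  "\<exists>K. \<forall>a\<in>{p. fst p = c (snd p)} \<inter> lev (prod_scale (const_scale :: 'v scale) W) m.
     \<forall>b\<in>{p. snd p = 0} \<inter> lev (prod_scale const_scale W) m.
       nrm (prod_scale const_scale W) m a \<le> K * nrm (prod_scale const_scale W) m (a + b) \<and>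
       nrm (prod_scale const_scale W) m b \<le> K * nrm (prod_scale const_scale W) m (a + b)"
proof -
  let ?F = "prod_scale (const_scale :: 'v scale) W"
  obtain K where K: "K \<ge> 1" "\<And>w. w \<in> lev W m \<Longrightarrow> norm (c w) \<le> K * nrm W m w"
    "\<And>w. w \<in> lev W m \<Longrightarrow> nrm ?F m (c w, w) \<le> K * nrm W m w"
    using graph_nrm_bound by blast
  have "nrm ?F m a \<le> (K + 1) * nrm ?F m (a + b) \<and> nrm ?F m b \<le> (K + 1) * nrm ?F m (a + b)"
    if a: "a \<in> {p. fst p = c (snd p)} \<inter> lev ?F m" and b: "b \<in> {p. snd p = 0} \<inter> lev ?F m" for a b
  proof -
    obtain w z where ab: "a = (c w, w)" "b = (z, 0)" and w: "w \<in> lev W m"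
      using a b by (auto simp: mem_Times_iff prod_eq_iff)
    have w_le: "K * nrm W m w \<le> K * nrm ?F m (a + b)"
      using nrm_prod_const_snd_le[of W m "a + b"] K(1) by (simp add: ab)
    have "nrm ?F m a \<le> K * nrm ?F m (a + b)"
      using K(3)[OF w] w_le by (simp add: ab)
    moreover have "nrm ?F m b \<le> norm (c w + z) + norm (c w)"
      using norm_triangle_ineq4[of "c w + z" "c w"] by (simp add: ab nrm_prod_const_zero_snd)
    moreover have "norm (c w + z) \<le> nrm ?F m (a + b)"
      using nrm_prod_const_fst_le[of "a + b" W m] by (simp add: ab)
    moreover have "0 \<le> nrm ?F m (a + b)"
      by (simp add: nrm_prod_scale)
    ultimately show ?thesis
      using K(2)[OF w] w_le by (simp add: distrib_right)
  qed
  then show ?thesis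
    by blast
qed

lemma sc_splitting_graph_snd:
  "sc_splitting (prod_scale (const_scale :: 'v scale) W) {p. fst p = c (snd p)} {p. snd p = 0}"
  unfolding sc_splitting_def
proof (intro conjI allI ballI lclosed_graph lclosed_snd_eq_0 graph_projections_bounded)
  let ?F = "prod_scale (const_scale :: 'v scale) W"
  note lin = bounded_linear.linear[OF c]
  show "subspace {p. fst p = c (snd p)}"
    using linear_add[OF lin] linear_scale[OF lin] linear_0[OF lin] by (auto simp: subspace_def)
  show "subspace {p :: 'v \<times> 'w. snd p = 0}"
    by (auto simp: subspace_def)
  show "{p. fst p = c (snd p)} \<subseteq> lev ?F 0" "{p. snd p = 0} \<subseteq> lev ?F 0"
    "{p. fst p = c (snd p)} \<inter> {p. snd p = 0} = {0}"
    using linear_0[OF lin] by (auto simp: prod_eq_iff sc_banach_lev_0[OF W])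
  show "\<exists>a\<in>{p. fst p = c (snd p)} \<inter> lev ?F m. \<exists>b\<in>{p. snd p = 0} \<inter> lev ?F m. x = a + b"
    if "x \<in> lev ?F m" for x m
    using that by (intro bexI[of _ "(c (snd x), snd x)"] bexI[of _ "(fst x - c (snd x), 0)"])
      (auto simp: mem_Times_iff)
qed

lemma sc_operator_graph:
  "sc_operator (prod_scale (const_scale :: 'u::real_normed_vector scale) W) (prod_scale (const_scale :: 'v scale) W)
     (\<lambda>x. (c (snd x), snd x))"
  unfolding sc_operator_def
proof (intro conjI ballI allI)
  let ?E = "prod_scale (const_scale :: 'u scale) W" and ?F = "prod_scale (const_scale :: 'v scale) W"
  note lin = bounded_linear.linear[OF c]
  fix h1 h2 :: "'u \<times> 'w" and r :: real
  show "(c (snd (h1 + h2)), snd (h1 + h2)) = (c (snd h1), snd h1) + (c (snd h2), snd h2)"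
    "(c (snd (r *\<^sub>R h1)), snd (r *\<^sub>R h1)) = r *\<^sub>R (c (snd h1), snd h1)"
    by (simp_all add: linear_add[OF lin] linear_scale[OF lin])
next
  let ?E = "prod_scale (const_scale :: 'u scale) W" and ?F = "prod_scale (const_scale :: 'v scale) W"
  fix m and x :: "'u \<times> 'w"
  assume "x \<in> lev ?E m"
  then show "(c (snd x), snd x) \<in> lev ?F m"
    by (auto simp: mem_Times_iff)
next
  let ?E = "prod_scale (const_scale :: 'u scale) W" and ?F = "prod_scale (const_scale :: 'v scale) W"
  fix m
  obtain K where K: "K \<ge> 1" "\<And>w. w \<in> lev W m \<Longrightarrow> nrm ?F m (c w, w) \<le> K * nrm W m w"
    using graph_nrm_bound by blast
  have "nrm ?F m (c (snd x), snd x) \<le> K * nrm ?E m x" if "x \<in> lev ?E m" for x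
  proof -
    have "snd x \<in> lev W m"
      using that by (auto simp: mem_Times_iff)
    then have "nrm ?F m (c (snd x), snd x) \<le> K * nrm W m (snd x)"
      by (rule K(2))
    also have "\<dots> \<le> K * nrm ?E m x"
      using K(1) by (intro mult_left_mono nrm_prod_const_snd_le) simp
    finally show ?thesis .
  qed
  then show "\<exists>B. \<forall>x\<in>lev ?E m. nrm ?F m (c (snd x), snd x) \<le> B * nrm ?E m x"
    by blast
qed

lemma sc_iso_on_graph:
  "sc_iso_on (prod_scale (const_scale :: 'u::real_normed_vector scale) W) (prod_scale (const_scale :: 'v scale) W)
     {p. fst p = 0} {p. fst p = c (snd p)} (\<lambda>x. (c (snd x), snd x))"
  unfolding sc_iso_on_def
proof (intro conjI allI)
  let ?E = "prod_scale (const_scale :: 'u scale) W" and ?F = "prod_scale (const_scale :: 'v scale) W"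
  fix m
  show "bij_betw (\<lambda>x. (c (snd x), snd x)) ({p. fst p = 0} \<inter> lev ?E m) ({p. fst p = c (snd p)} \<inter> lev ?F m)"
    unfolding bij_betw_def
  proof
    show "inj_on (\<lambda>x. (c (snd x), snd x)) ({p. fst p = 0} \<inter> lev ?E m)"
      by (auto simp: inj_on_def prod_eq_iff)
    have "(c w, w) \<in> (\<lambda>x. (c (snd x), snd x)) ` ({p. fst p = 0} \<inter> lev ?E m)" if "w \<in> lev W m" for w
      using that by (intro image_eqI[of _ _ "(0, w)"]) auto
    then show "(\<lambda>x. (c (snd x), snd x)) ` ({p. fst p = 0} \<inter> lev ?E m) = {p. fst p = c (snd p)} \<inter> lev ?F m"
      by (auto simp: mem_Times_iff)
  qed
  obtain K where K: "K \<ge> 1" "\<And>w. w \<in> lev W m \<Longrightarrow> nrm ?F m (c w, w) \<le> K * nrm W m w"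
    using graph_nrm_bound by blast
  have "nrm ?F m (c (snd x), snd x) \<le> K * nrm ?E m x \<and> nrm ?E m x \<le> K * nrm ?F m (c (snd x), snd x)"
    if x: "x \<in> {p. fst p = 0} \<inter> lev ?E m" for x
  proof -
    obtain w where xw: "x = (0, w)" and w: "w \<in> lev W m"
      using x by (cases x) (auto simp: mem_Times_iff)
    then have nrm_x: "nrm ?E m x = nrm W m w"
      by (simp add: nrm_prod_const_zero_fst W.nrm_nonneg)
    have "nrm W m w \<le> 1 * nrm ?F m (c w, w)"
      using nrm_prod_const_snd_le[of W m "(c w, w)"] by simp
    also have "\<dots> \<le> K * nrm ?F m (c w, w)"
      using K(1) by (intro mult_right_mono) (simp_all add: nrm_prod_scale)
    finally have "nrm ?E m x \<le> K * nrm ?F m (c (snd x), snd x)"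
      unfolding nrm_x by (simp add: xw)
    with K(2)[OF w] show ?thesis
      unfolding nrm_x by (simp add: xw)
  qed
  then show "\<exists>B. \<forall>x\<in>{p. fst p = 0} \<inter> lev ?E m. nrm ?F m (c (snd x), snd x) \<le> B * nrm ?E m x \<and>
      nrm ?E m x \<le> B * nrm ?F m (c (snd x), snd x)"
    by blast
qed

end

text \<open>The linearization $(v, w) \mapsto (c(w), w)$ has kernel $\mathbb R^n \oplus 0$ and is an
  sc-isomorphism from $0 \oplus W$ onto the graph of $c$, which is complemented by
  $\mathbb R^N \oplus 0$.\<close>
lemma sc_fredholm_index_graph:
  fixes c :: "'w \<Rightarrow> real ^ 'N::finite"
  assumes c: "bounded_linear c"
  shows "sc_fredholm_index (prod_scale (const_scale :: (real ^ 'n::finite) scale) W) (prod_scale const_scale W)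
      (\<lambda>x. (c (snd x), snd x)) (int CARD('n) - int CARD('N))"
  unfolding sc_fredholm_index_def
proof (intro conjI exI)
  show "sc_operator (prod_scale const_scale W) (prod_scale const_scale W) (\<lambda>x. (c (snd x), snd x))"
    using c by (rule sc_operator_graph)
  show "sc_splitting (prod_scale (const_scale :: (real ^ 'n) scale) W) {p. snd p = 0} {p. fst p = 0}"
    by (rule sc_splitting_snd_fst)
  show "sc_splitting (prod_scale const_scale W) {p. fst p = c (snd p)} {p. snd p = 0}"
    using c by (rule sc_splitting_graph_snd)
  show "{p :: (real ^ 'n) \<times> 'w. snd p = 0} = {x \<in> lev (prod_scale const_scale W) 0. (c (snd x), snd x) = 0}"
    using linear_0[OF bounded_linear.linear[OF c]] by (auto simp: sc_banach_lev_0[OF W] prod_eq_iff)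
  show "findim {p :: (real ^ 'n) \<times> 'w. snd p = 0}" "findim {p :: (real ^ 'N) \<times> 'w. snd p = 0}"
    by (rule findim_snd_eq_0)+
  have "(c w, w) \<in> (\<lambda>x. (c (snd x), snd x)) ` {p :: (real ^ 'n) \<times> 'w. fst p = 0}" for w
    by (intro image_eqI[of _ _ "(0, w)"]) auto
  then show "{p. fst p = c (snd p)} = (\<lambda>x. (c (snd x), snd x)) ` {p :: (real ^ 'n) \<times> 'w. fst p = 0}"
    by auto
  show "sc_iso_on (prod_scale const_scale W) (prod_scale const_scale W) {p :: (real ^ 'n) \<times> 'w. fst p = 0}
      {p. fst p = c (snd p)} (\<lambda>x. (c (snd x), snd x))"
    using c by (rule sc_iso_on_graph)
  show "int CARD('n) - int CARD('N) =
      int (dim {p :: (real ^ 'n) \<times> 'w. snd p = 0}) - int (dim {p :: (real ^ 'N) \<times> 'w. snd p = 0})"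
    by (simp add: dim_snd_eq_0)
qed

end

section \<open>Derivatives read off from tangent maps\<close>

lemma nrm_tscale_0 [simp]: "nrm (tscale S 0) m y = nrm S m (y 0)"
  by (simp add: nrm_tscale)

lemma tmap_0: "tmap E F U g 0 x = tuple_at 0 (g (x 0))"
  by (simp add: fun_eq_iff tuple_at_def)

lemma tmap_1_tuple_at_1:
  "tmap E F U g 1 (tuple_at 1 h) = tuple_at 0 (g 0) +
     tuple_at 1 ((SOME L. sc_deriv (tscale E 0) (tscale F 0) (tdom E U 0) (tmap E F U g 0) 0 L) (tuple_at 0 h) 0)"
proof -
  let ?L = "SOME L. sc_deriv (tscale E 0) (tscale F 0) (tdom E U 0) (tmap E F U g 0) 0 L"
  have lo: "lowhalf 0 (tuple_at 1 h) = 0" and hi: "highhalf 0 (tuple_at 1 h) = tuple_at 0 h"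
    by (simp_all add: fun_eq_iff lowhalf_def highhalf_def tuple_at_def)
  have "tmap E F U g (Suc 0) (tuple_at 1 h) =
      (\<lambda>i. if i < 1 then tmap E F U g 0 0 i else if i < 2 then ?L (tuple_at 0 h) (i - 1) else 0)"
    by (simp add: Let_def lo[unfolded One_nat_def] hi[unfolded One_nat_def] fun_eq_iff)
  then show ?thesis
    by (auto simp: fun_eq_iff tuple_at_def numeral_2_eq_2 less_Suc_eq)
qed

lemma nrm_bound_if_small_on_ball:
  assumes E: "normed_scale E" and F: "normed_scale F"
    and mem: "\<And>h. h \<in> lev E m \<Longrightarrow> L h \<in> lev F m"
    and scale: "\<And>h c. h \<in> lev E m \<Longrightarrow> L (c *\<^sub>R h) = c *\<^sub>R L h"
    and d: "d > 0" "\<And>h. h \<in> lev E m \<Longrightarrow> nrm E m h < d \<Longrightarrow> nrm F m (L h) < 1"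
  shows "\<exists>B. \<forall>h\<in>lev E m. nrm F m (L h) \<le> B * nrm E m h"
proof (intro exI[of _ "2 / d"] ballI)
  interpret E: normed_scale E by fact
  interpret F: normed_scale F by fact
  fix h assume h: "h \<in> lev E m"
  show "nrm F m (L h) \<le> 2 / d * nrm E m h"
  proof (cases "h = 0")
    case True
    then show ?thesis
      using scale[of 0 0] by simp
  next
    case False
    then have pos: "nrm E m h > 0"
      using E.nrm_nonneg[OF h] E.nrm_eq_0_iff[OF h] by linarith
    define r where "r = d / (2 * nrm E m h)"
    have r: "r > 0"
      unfolding r_def using d(1) pos by simp
    have "nrm E m (r *\<^sub>R h) = d / 2"
      using E.nrm_scaleR[OF h, of r] r pos d(1) by (simp add: r_def)
    then have "nrm F m (L (r *\<^sub>R h)) < 1"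
      using d E.scaleR_mem[OF h] by simp
    moreover have "nrm F m (L (r *\<^sub>R h)) = r * nrm F m (L h)"
      using scale[OF h] F.nrm_scaleR[OF mem[OF h]] r by simp
    ultimately have "r * nrm F m (L h) < 1"
      by simp
    then have "nrm F m (L h) < 1 / r"
      using r by (simp add: field_simps)
    also have "1 / r = 2 / d * nrm E m h"
      unfolding r_def using d(1) pos by simp
    finally show ?thesis by simp
  qed
qed

lemma lev0_bounded_linear_tuple_at_0:
  assumes E: "normed_scale E" and L: "lev0_bounded_linear (tscale E 0) (tscale F 0) L"
  shows "lev0_bounded_linear E F (\<lambda>h. L (tuple_at 0 h) 0)"
  unfolding lev0_bounded_linear_def
proof (intro conjI ballI allI)
  have t: "tuple_at 0 h \<in> lev (tscale E 0) 0" if "h \<in> lev E 0" for h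
    using that by (intro tuple_at_mem_tscale[OF E]) simp_all
  fix h1 h2 r assume h: "h1 \<in> lev E 0" "h2 \<in> lev E 0"
  have "tuple_at 0 (h1 + h2) = tuple_at 0 h1 + tuple_at 0 h2" "tuple_at 0 (r *\<^sub>R h1) = r *\<^sub>R tuple_at 0 h1"
    by (simp_all add: fun_eq_iff tuple_at_def)
  then show "L (tuple_at 0 (h1 + h2)) 0 = L (tuple_at 0 h1) 0 + L (tuple_at 0 h2) 0"
    "L (tuple_at 0 (r *\<^sub>R h1)) 0 = r *\<^sub>R L (tuple_at 0 h1) 0"
    using lev0_bounded_linear_add[OF L t t] lev0_bounded_linear_scaleR[OF L t] h by simp_all
next
  have t: "tuple_at 0 h \<in> lev (tscale E 0) 0" if "h \<in> lev E 0" for h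
    using that by (intro tuple_at_mem_tscale[OF E]) simp_all
  show "L (tuple_at 0 h) 0 \<in> lev F 0" if "h \<in> lev E 0" for h
    using lev_tscale_component[OF lev0_bounded_linear_mem[OF L t[OF that]], of 0] by simp
  obtain B where "\<forall>h\<in>lev (tscale E 0) 0. nrm (tscale F 0) 0 (L h) \<le> B * nrm (tscale E 0) 0 h"
    using L unfolding lev0_bounded_linear_def by blast
  with t show "\<exists>B. \<forall>h\<in>lev E 0. nrm F 0 (L (tuple_at 0 h) 0) \<le> B * nrm E 0 h"
    by fastforce
qed

lemma sc_deriv_tmap_0:
  assumes E: "normed_scale E" and U: "germ_nbhd E C U"
    and D: "sc_deriv (tscale E 0) (tscale F 0) (tdom E U 0) (tmap E F U g 0) (tuple_at 0 x) L"
  shows "sc_deriv E F U g x (\<lambda>h. L (tuple_at 0 h) 0)"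
  unfolding sc_deriv_iff
proof (intro conjI allI impI lev0_bounded_linear_tuple_at_0[OF E sc_derivD(1)[OF D]])
  fix e :: real assume "e > 0"
  then obtain d where d: "d > 0" "\<And>h. tuple_at 0 x + h \<in> tdom E U 0 1 \<Longrightarrow> nrm (tscale E 0) 1 h < d \<Longrightarrow>
      nrm (tscale F 0) 0 (tmap E F U g 0 (tuple_at 0 x + h) - tmap E F U g 0 (tuple_at 0 x) - L h)
        \<le> e * nrm (tscale E 0) 1 h"
    using sc_derivD(2)[OF D] by blast
  show "\<exists>d>0. \<forall>h. x + h \<in> U 1 \<and> nrm E 1 h < d \<longrightarrow> nrm F 0 (g (x + h) - g x - L (tuple_at 0 h) 0) \<le> e * nrm E 1 h"
  proof (intro exI[of _ d] conjI allI impI)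
    fix h assume h: "x + h \<in> U 1 \<and> nrm E 1 h < d"
    then have "x + h \<in> lev E 1"
      using germ_nbhd_subset[OF U] by blast
    then have "tuple_at 0 (x + h) \<in> tdom E U 0 1"
      using h by (simp add: tdom_def tuple_at_mem_tscale[OF E])
    moreover have "tuple_at 0 x + tuple_at 0 h = tuple_at 0 (x + h)"
      by (simp add: fun_eq_iff tuple_at_def)
    ultimately show "nrm F 0 (g (x + h) - g x - L (tuple_at 0 h) 0) \<le> e * nrm E 1 h"
      using d(2)[of "tuple_at 0 h"] h by (simp add: tmap_0 tuple_at_def)
  qed (rule d(1))
qed

text \<open>Since $T g(0, h) = (g(0), Dg(0) h)$, continuity of $T g$ on $E_{m+1} \oplus E_m$ at $(0, 0)$
  shows that $Dg(0)$ maps $E_m$ boundedly into $F_m$.\<close>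
lemma sc_operator_if_tmap_1_sc0:
  assumes E: "normed_scale E" and F: "normed_scale F" and U: "germ_nbhd E C U"
    and sc0_T: "sc0 (tscale E 1) (tscale F 1) (tdom E U 1) (tmap E F U g 1)"
    and lin: "lev0_bounded_linear E F L"
    and T_tuple: "\<And>h. tmap E F U g 1 (tuple_at 1 h) = tuple_at 0 (g 0) + tuple_at 1 (L h)"
  shows "sc_operator E F L"
proof -
  have t1: "tuple_at 1 h \<in> tdom E U 1 m" if "h \<in> lev E m" for h m
    using that germ_nbhd_zero[OF U] by (simp add: tdom_def tuple_at_mem_tscale[OF E] tsh_1)
  have mem: "L h \<in> lev F m" if "h \<in> lev E m" for h m
  proof -
    have "tmap E F U g 1 (tuple_at 1 h) \<in> lev (tscale F 1) m"
      using sc0_T t1[OF that] unfolding sc0_def by blast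
    then have "tuple_at 0 (g 0) + tuple_at 1 (L h) \<in> lev (tscale F 1) m"
      by (simp only: T_tuple)
    from lev_tscale_component[OF this, of 1] show ?thesis
      by (simp add: tsh_1)
  qed
  have "\<exists>B. \<forall>h\<in>lev E m. nrm F m (L h) \<le> B * nrm E m h" for m
  proof -
    obtain d where d: "d > 0" "\<And>y. y \<in> tdom E U 1 m \<Longrightarrow> nrm (tscale E 1) m (y - 0) < d \<Longrightarrow>
        nrm (tscale F 1) m (tmap E F U g 1 y - tmap E F U g 1 0) < 1"
      using sc0_T zero_mem_tdom[OF E U] unfolding sc0_def by (meson zero_less_one)
    have "L 0 = 0"
      using lev0_bounded_linear_scaleR[OF lin, of 0 0] normed_scale.zero_mem[OF E] by simp
    then have "tmap E F U g 1 0 = tuple_at 0 (g 0)"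
      using T_tuple[of 0] by (simp only: tuple_at_zero add_0_right)
    then have "tmap E F U g 1 (tuple_at 1 h) - tmap E F U g 1 0 = tuple_at 1 (L h)" for h
      by (simp only: T_tuple add_diff_cancel_left')
    then have small: "nrm F m (L h) < 1" if "h \<in> lev E m" "nrm E m h < d" for h
      using d(2)[OF t1[OF that(1)]] that nrm_tscale_tuple_at[OF E, of 1 1 m h]
        nrm_tscale_tuple_at[OF F, of 1 1 m "L h"] by (simp add: tsh_1)
    have hom: "L (c *\<^sub>R h) = c *\<^sub>R L h" if "h \<in> lev E m" for h c
      using lev0_bounded_linear_scaleR[OF lin] that normed_scale.lev_antimono[OF E, of 0 m] by blast
    show ?thesis
      by (rule nrm_bound_if_small_on_ball[where L = L, OF E F mem hom d(1) small])
  qed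
  with lin mem show ?thesis
    unfolding sc_operator_def lev0_bounded_linear_def by blast
qed

lemma sc1_deriv_at_0:
  assumes E: "normed_scale E" and F: "normed_scale F" and U: "germ_nbhd E C U"
    and g: "sck E F U g 1"
  shows "\<exists>L. sc_deriv E F U g 0 L \<and> sc_operator E F L"
proof -
  let ?L = "\<lambda>h. (SOME L. sc_deriv (tscale E 0) (tscale F 0) (tdom E U 0) (tmap E F U g 0) 0 L) (tuple_at 0 h) 0"
  have sc0_T: "sc0 (tscale E 1) (tscale F 1) (tdom E U 1) (tmap E F U g 1)"
    and ex: "\<exists>L. sc_deriv (tscale E 0) (tscale F 0) (tdom E U 0) (tmap E F U g 0) 0 L"
    using g zero_mem_tdom[OF E U] unfolding sck_def by auto
  have "sc_deriv (tscale E 0) (tscale F 0) (tdom E U 0) (tmap E F U g 0) (tuple_at 0 0)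
      (SOME L. sc_deriv (tscale E 0) (tscale F 0) (tdom E U 0) (tmap E F U g 0) 0 L)"
    using someI_ex[OF ex] by simp
  then have "sc_deriv E F U g 0 ?L"
    by (rule sc_deriv_tmap_0[OF E U])
  moreover have "sc_operator E F ?L"
    using sc_derivD(1)[OF calculation] tmap_1_tuple_at_1
    by (rule sc_operator_if_tmap_1_sc0[OF E F U sc0_T])
  ultimately show ?thesis
    by blast
qed

lemma lev0_bounded_linear_minus_sc_operator:
  assumes E: "normed_scale E" and F: "normed_scale F"
    and L: "lev0_bounded_linear E F L" and T: "sc_operator E F T"
  shows "lev0_bounded_linear E F (\<lambda>h. L h - T h)"
  unfolding lev0_bounded_linear_def
proof (intro conjI ballI allI)
  interpret F: normed_scale F by fact
  fix h1 h2 r assume "h1 \<in> lev E 0" "h2 \<in> lev E 0"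
  then show "L (h1 + h2) - T (h1 + h2) = (L h1 - T h1) + (L h2 - T h2)"
    "L (r *\<^sub>R h1) - T (r *\<^sub>R h1) = r *\<^sub>R (L h1 - T h1)"
    by (simp_all add: lev0_bounded_linear_add[OF L] lev0_bounded_linear_scaleR[OF L]
        sc_operator_add[OF T] sc_operator_scaleR[OF T] scaleR_diff_right)
next
  interpret F: normed_scale F by fact
  have mem: "L h \<in> lev F 0" "T h \<in> lev F 0" if "h \<in> lev E 0" for h
    using lev0_bounded_linear_mem[OF L that] sc_operator_mem[OF T that] .
  then show "L h - T h \<in> lev F 0" if "h \<in> lev E 0" for h
    using that by (simp add: F.diff_mem)
  obtain B1 where B1: "\<forall>h\<in>lev E 0. nrm F 0 (L h) \<le> B1 * nrm E 0 h"
    using lev0_bounded_linear_bound[OF L E] by blast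
  obtain B2 where B2: "\<forall>h\<in>lev E 0. nrm F 0 (T h) \<le> B2 * nrm E 0 h"
    using sc_operator_bound[OF T E] by blast
  have "nrm F 0 (L h - T h) \<le> (B1 + B2) * nrm E 0 h" if "h \<in> lev E 0" for h
    using F.nrm_triangle_diff[OF mem[OF that]] B1 B2 that by (fastforce simp: distrib_right)
  then show "\<exists>B. \<forall>h\<in>lev E 0. nrm F 0 (L h - T h) \<le> B * nrm E 0 h"
    by blast
qed

lemma sc_deriv_minus_sc_operator:
  assumes E: "normed_scale E" "lev E 0 = UNIV" and F: "normed_scale F"
    and D: "sc_deriv E F U g x L" and T: "sc_operator E F T"
  shows "sc_deriv E F U (\<lambda>y. g y - (a + T y)) x (\<lambda>h. L h - T h)"
  unfolding sc_deriv_iff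
proof (intro conjI allI impI lev0_bounded_linear_minus_sc_operator[OF E(1) F sc_derivD(1)[OF D] T])
  fix e :: real assume "e > 0"
  then obtain d where "d > 0" "\<forall>h. x + h \<in> U 1 \<and> nrm E 1 h < d \<longrightarrow>
      nrm F 0 (g (x + h) - g x - L h) \<le> e * nrm E 1 h"
    using sc_derivD(2)[OF D] by blast
  moreover have "g (x + h) - (a + T (x + h)) - (g x - (a + T x)) - (L h - T h) = g (x + h) - g x - L h" for h
    using sc_operator_add[OF T] E(2) by simp
  ultimately show "\<exists>d>0. \<forall>h. x + h \<in> U 1 \<and> nrm E 1 h < d \<longrightarrow>
      nrm F 0 (g (x + h) - (a + T (x + h)) - (g x - (a + T x)) - (L h - T h)) \<le> e * nrm E 1 h"
    by metis
qed

lemma sck_value_at_0_mem: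
  assumes "normed_scale E" "germ_nbhd E C U" "sck E F U g k"
  shows "g 0 \<in> lev F m"
proof -
  have "tmap E F U g 0 ` tdom E U 0 m \<subseteq> lev (tscale F 0) m"
    using assms(3) unfolding sck_def sc0_def by blast
  then have "tmap E F U g 0 0 \<in> lev (tscale F 0) m"
    using zero_mem_tdom[OF assms(1,2), of 0 m] by blast
  then have "tuple_at 0 (g 0) \<in> lev (tscale F 0) m"
    by (simp only: tmap_0 zero_fun_apply)
  from lev_tscale_component[OF this, of 0] show ?thesis
    by simp
qed

section \<open>Germs on a partial quadrant\<close>

lemma convex_quadrant: "convex (quadrant J)"
  unfolding quadrant_def convex_def by (auto intro!: add_nonneg_nonneg mult_nonneg_nonneg)

lemma quadrant_add_const:
  assumes "p \<in> quadrant J" "norm v \<le> r"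
  shows "p + v + (\<chi> i. r) \<in> quadrant J"
proof -
  have "0 \<le> p $ i + v $ i + r" if "i \<in> J" for i
    using assms that component_le_norm_cart[of v i] unfolding quadrant_def by auto
  then show ?thesis
    unfolding quadrant_def by simp
qed

lemma sc0_contractionD:
  assumes "sc0_contraction V W U f" "0 < e" "e < 1"
  shows "\<exists>d>0. \<forall>v w w'. (v, w) \<in> U m \<and> (v, w') \<in> U m \<and> norm v < d \<and> nrm W m w < d \<and> nrm W m w' < d \<longrightarrow>
           nrm W m ((w - f (v, w)) - (w' - f (v, w'))) \<le> e * nrm W m (w - w')"
proof -
  have "\<forall>m e. 0 < e \<and> e < 1 \<longrightarrow> (\<exists>d>0. \<forall>v w w'. (v, w) \<in> U m \<and> (v, w') \<in> U m \<and>
      norm v < d \<and> nrm W m w < d \<and> nrm W m w' < d \<longrightarrow>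
      nrm W m ((w - f (v, w)) - (w' - f (v, w'))) \<le> e * nrm W m (w - w'))"
    using assms(1) unfolding sc0_contraction_def by (elim conjE) assumption
  with assms(2,3) show ?thesis
    by blast
qed

context
  fixes W :: "'w::banach scale" and J :: "'n::finite set" and U :: "nat \<Rightarrow> ((real ^ 'n) \<times> 'w) set"
  assumes W: "sc_banach W" and U: "germ_nbhd (prod_scale const_scale W) (quadrant J \<times> UNIV) U"
begin

abbreviation EW :: "((real ^ 'n) \<times> 'w) scale" where
  "EW \<equiv> prod_scale const_scale W"

lemma normed_scale_EW: "normed_scale EW"
  using sc_banach_normed_scale[OF W] by (rule normed_scale_prod_const)

lemma normed_scale_tscale_EW: "normed_scale (tscale EW j)"
  using normed_scale_EW by (rule normed_scale_tscale)

lemma levels_dense_tscale_EW: "levels_dense (tscale EW j)"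
  using sc_banach_normed_scale[OF W] sc_banach_levels_dense[OF W]
  by (intro levels_dense_tscale levels_dense_prod_const)

lemma tdom_eventually_segment:
  assumes x: "x \<in> tdom EW U j 1" and h: "h \<in> lev (tscale EW j) 1"
    and xh: "x 0 + h 0 \<in> quadrant J \<times> UNIV"
  shows "\<forall>\<^sub>F t in at_right 0. x + t *\<^sub>R h \<in> tdom EW U j 1"
proof -
  have x0: "x 0 \<in> U (1 + j)" and x1: "x \<in> lev (tscale EW j) 1"
    using x by (simp_all add: tdom_def)
  have h0: "h 0 \<in> lev EW (1 + j)"
    using lev_tscale_component[OF h, of 0] by simp
  have "x 0 + t *\<^sub>R h 0 \<in> quadrant J \<times> UNIV" if "t \<in> {0<..<1}" for t
  proof -
    have "x 0 \<in> quadrant J \<times> UNIV"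
      using germ_nbhd_subset[OF U] x0 by blast
    with xh that have "(1 - t) *\<^sub>R x 0 + t *\<^sub>R (x 0 + h 0) \<in> quadrant J \<times> UNIV"
      by (intro convexD convex_Times convex_quadrant) auto
    then show ?thesis
      by (simp add: algebra_simps)
  qed
  then have "\<forall>\<^sub>F t in at_right 0. x 0 + t *\<^sub>R h 0 \<in> U (1 + j)"
    by (rule germ_nbhd_eventually_segment[OF U normed_scale_EW x0 h0])
  then show ?thesis
  proof eventually_elim
    case (elim t)
    have "x + t *\<^sub>R h \<in> lev (tscale EW j) 1"
      using x1 h normed_scale.add_mem[OF normed_scale_tscale_EW] normed_scale.scaleR_mem[OF normed_scale_tscale_EW]
      by blast
    with elim show ?case
      by (simp add: tdom_def)
  qed
qed

text \<open>Uniqueness of sc-derivatives of tangent maps on the quadrant: every $h \in E_1$ is the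
  difference of two directions pointing into the quadrant, and $E_1$ is dense in $E_0$.\<close>
lemma tmap_deriv_unique:
  fixes F :: "'b::real_vector scale"
  assumes F: "normed_scale F"
    and D1: "sc_deriv (tscale EW j) (tscale F j) (tdom EW U j) f x L1"
    and D2: "sc_deriv (tscale EW j) (tscale F j) (tdom EW U j) f x L2"
    and f: "\<And>y. y \<in> tdom EW U j 1 \<Longrightarrow> f y \<in> lev (tscale F j) 0"
    and x: "x \<in> tdom EW U j 1" and h: "h \<in> lev (tscale EW j) 0"
  shows "L1 h = L2 h"
proof (rule lev0_bounded_linear_eq_if_eq_on_lev1[OF normed_scale_tscale_EW levels_dense_tscale_EW
      normed_scale_tscale[OF F] sc_derivD(1)[OF D1] sc_derivD(1)[OF D2] _ h])
  interpret TE: normed_scale "tscale EW j"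
    by (rule normed_scale_tscale_EW)
  have along: "L1 h = L2 h" if "h \<in> lev (tscale EW j) 1" "x 0 + h 0 \<in> quadrant J \<times> UNIV" for h
    using that by (intro sc_deriv_unique_along[OF normed_scale_tscale_EW normed_scale_tscale[OF F]
          D1 D2 f x] tdom_eventually_segment[OF x])
  fix h assume h: "h \<in> lev (tscale EW j) 1"
  define Q where "Q = tuple_at 0 ((\<chi> i. norm (fst (h 0))) :: real ^ 'n, 0 :: 'w)"
  have Q: "Q \<in> lev (tscale EW j) 1"
    unfolding Q_def using normed_scale.zero_mem[OF sc_banach_normed_scale[OF W]]
    by (intro tuple_at_mem_tscale[OF normed_scale_EW]) auto
  have "x 0 \<in> quadrant J \<times> UNIV"
    using germ_nbhd_subset[OF U, of "1 + j"] x by (auto simp: tdom_def)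
  then have x0: "fst (x 0) \<in> quadrant J"
    by (simp add: mem_Times_iff)
  have "x 0 + Q 0 \<in> quadrant J \<times> UNIV"
    using quadrant_add_const[OF x0, of 0] by (simp add: Q_def tuple_at_def mem_Times_iff)
  moreover have "x 0 + (h + Q) 0 \<in> quadrant J \<times> UNIV"
    using quadrant_add_const[OF x0 order_refl] by (simp add: Q_def tuple_at_def mem_Times_iff add.assoc)
  ultimately have "L1 (h + Q) = L2 (h + Q)" "L1 Q = L2 Q"
    using TE.add_mem[OF h Q] Q by (simp_all add: along)
  moreover have "h \<in> lev (tscale EW j) 0" "Q \<in> lev (tscale EW j) 0"
    using h Q TE.lev_Suc_subset[of 0] by auto
  ultimately show "L1 h = L2 h"
    using lev0_bounded_linear_add[OF sc_derivD(1)[OF D1]] lev0_bounded_linear_add[OF sc_derivD(1)[OF D2]]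
    by (metis add_right_cancel)
qed

lemma sc_deriv_tmap_affine:
  fixes F :: "'b::real_vector scale"
  assumes F: "normed_scale F" and T: "sc_operator EW F T"
    and formula: "\<And>y. y \<in> tdom EW U j 1 \<Longrightarrow> tmap EW F U (\<lambda>x. c + T x) j y = tuple_at 0 c + tuple_map T j y"
    and y: "y \<in> tdom EW U j 1"
  shows "sc_deriv (tscale EW j) (tscale F j) (tdom EW U j) (tmap EW F U (\<lambda>x. c + T x) j) y (tuple_map T j)"
proof -
  have "sc_deriv (tscale EW j) (tscale F j) (tdom EW U j) (\<lambda>y. tuple_at 0 c + tuple_map T j y) y
      (tuple_map T j)"
    using y by (intro sc_deriv_affine[OF normed_scale_tscale_EW normed_scale_tscale[OF F]
          sc_operator_tuple_map[OF normed_scale_EW T]]) (auto simp: tdom_def)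
  then show ?thesis
    using sc_deriv_cong[where V = "tdom EW U j" and f = "tmap EW F U (\<lambda>x. c + T x) j"
        and g = "\<lambda>y. tuple_at 0 c + tuple_map T j y", OF formula y] by blast
qed

lemma tuple_at_0_plus_tuple_map_Suc:
  fixes T :: "'a::zero \<Rightarrow> 'b::real_vector"
  shows "tuple_at 0 c + tuple_map T (Suc j) x = (\<lambda>i. if i < 2^j then (tuple_at 0 c + tuple_map T j (lowhalf j x)) i
     else if i < 2^Suc j then tuple_map T j (highhalf j x) (i - 2^j) else 0)"
  by (auto simp: fun_eq_iff tuple_at_def tuple_map_def lowhalf_def highhalf_def)

text \<open>The tangent maps of $c + T$ are computed by induction on $j$; the $\mathrm{SOME}$ in the
  definition of $T^{j+1}$ is pinned down by the uniqueness of sc-derivatives.\<close>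
lemma tmap_affine:
  fixes F :: "'b::real_vector scale"
  assumes F: "normed_scale F" and c: "\<And>m. c \<in> lev F m" and T: "sc_operator EW F T"
  shows "x \<in> tdom EW U j 0 \<Longrightarrow> tmap EW F U (\<lambda>x. c + T x) j x = tuple_at 0 c + tuple_map T j x"
proof (induction j arbitrary: x)
  case 0
  show ?case
    by (simp add: fun_eq_iff tuple_at_def tuple_map_def)
next
  case (Suc j)
  let ?g = "\<lambda>x. c + T x"
  have lo: "lowhalf j x \<in> tdom EW U j 1"
    using Suc.prems by (rule lowhalf_mem_tdom)
  have tdom_1_0: "tdom EW U j 1 \<subseteq> tdom EW U j 0"
    by (rule tdom_antimono[OF normed_scale_EW U]) simp
  have IH: "tmap EW F U ?g j y = tuple_at 0 c + tuple_map T j y" if "y \<in> tdom EW U j 1" for y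
    using Suc.IH that tdom_1_0 by blast
  have D: "sc_deriv (tscale EW j) (tscale F j) (tdom EW U j) (tmap EW F U ?g j) (lowhalf j x) (tuple_map T j)"
    by (rule sc_deriv_tmap_affine[OF F T IH lo])
  have "tmap EW F U ?g j y \<in> lev (tscale F j) 0" if y: "y \<in> tdom EW U j 1" for y
  proof -
    have "y \<in> lev (tscale EW j) 0"
      using y tdom_1_0 by (auto simp: tdom_def)
    then show ?thesis
      unfolding IH[OF y] using tuple_at_mem_tscale[OF F _ c, of 0 j 0]
      by (intro normed_scale.add_mem[OF normed_scale_tscale[OF F]]
          sc_operator_mem[OF sc_operator_tuple_map[OF normed_scale_EW T]]) simp_all
  qed
  then have hi: "(SOME L. sc_deriv (tscale EW j) (tscale F j) (tdom EW U j) (tmap EW F U ?g j) (lowhalf j x) L)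
      (highhalf j x) = tuple_map T j (highhalf j x)"
    using tmap_deriv_unique[OF F someI[where P = "sc_deriv (tscale EW j) (tscale F j) (tdom EW U j)
        (tmap EW F U ?g j) (lowhalf j x)", OF D] D _ lo highhalf_mem_tscale[OF Suc.prems]]
    by blast
  show ?case
    unfolding tmap.simps(2) Let_def hi IH[OF lo] tuple_at_0_plus_tuple_map_Suc ..
qed

lemma sc_smooth_affine:
  fixes F :: "'b::real_vector scale"
  assumes F: "normed_scale F" and c: "\<And>m. c \<in> lev F m" and T: "sc_operator EW F T"
  shows "sc_smooth EW F U (\<lambda>x. c + T x)"
  unfolding sc_smooth_def sck_def
proof (intro allI impI conjI ballI)
  fix j
  have formula: "tmap EW F U (\<lambda>x. c + T x) j x = tuple_at 0 c + tuple_map T j x" if "x \<in> tdom EW U j m" for x m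
    using tmap_affine[OF F c T] tdom_antimono[OF normed_scale_EW U, of 0 m j] that by blast
  have c': "tuple_at 0 c \<in> lev (tscale F j) m" for m
    using tuple_at_mem_tscale[OF F _ c] by simp
  show "sc0 (tscale EW j) (tscale F j) (tdom EW U j) (tmap EW F U (\<lambda>x. c + T x) j)"
    using formula sc0_affine[OF normed_scale_tscale_EW normed_scale_tscale[OF F] c'
        sc_operator_tuple_map[OF normed_scale_EW T]]
    by (subst sc0_cong) (auto simp: tdom_def)
  show "\<exists>L. sc_deriv (tscale EW j) (tscale F j) (tdom EW U j) (tmap EW F U (\<lambda>x. c + T x) j) x L"
    if "x \<in> tdom EW U j 1" for x
    using sc_deriv_tmap_affine[OF F T formula[of _ 1] that] by blast
qed

lemma sc_operator_fst_part:
  fixes F :: "'b::real_vector scale"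
  assumes L: "sc_operator EW F L" and k: "m \<le> k"
  shows "\<exists>B. \<forall>x\<in>lev EW m. L (fst x, 0) \<in> lev F k \<and> nrm F k (L (fst x, 0)) \<le> B * nrm EW m x"
proof -
  obtain B where B: "B \<ge> 0" "\<forall>x\<in>lev EW k. nrm F k (L x) \<le> B * nrm EW k x"
    using sc_operator_bound[OF L normed_scale_EW] by blast
  have v0: "(v, 0) \<in> lev EW k" for v :: "real ^ 'n"
    using normed_scale.zero_mem[OF sc_banach_normed_scale[OF W]] by simp
  have "nrm F k (L (fst x, 0)) \<le> B * nrm EW m x" for x
  proof -
    have "nrm F k (L (fst x, 0)) \<le> B * nrm EW k (fst x, 0)"
      using B(2) v0 by blast
    also have "nrm EW k (fst x, 0) = norm (fst x)"
      using normed_scale.nrm_zero[OF sc_banach_normed_scale[OF W]] by (rule nrm_prod_const_zero_snd)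
    finally have "nrm F k (L (fst x, 0)) \<le> B * norm (fst x)" .
    also have "\<dots> \<le> B * nrm EW m x"
      using B(1) by (intro mult_left_mono nrm_prod_const_fst_le)
    finally show ?thesis .
  qed
  then show ?thesis
    using sc_operator_mem[OF L v0] by blast
qed

lemma sc_operator_fst_zero:
  fixes F :: "'b::real_vector scale"
  assumes L: "sc_operator EW F L"
  shows "sc_operator EW F (\<lambda>x. L (fst x, 0))" and "sc_operator EW (shift_scale F) (\<lambda>x. L (fst x, 0))"
proof -
  have lin: "L (u + v, 0) = L (u, 0) + L (v, 0)" "L (r *\<^sub>R u, 0) = r *\<^sub>R L (u, 0)"
    for u v :: "real ^ 'n" and r
    using sc_operator_add[OF L, of "(u, 0)" "(v, 0)"] sc_operator_scaleR[OF L, of "(u, 0)" r]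
      sc_banach_lev_0[OF W] by simp_all
  have op: "sc_operator EW F' (\<lambda>x. L (fst x, 0))"
    if bd: "\<And>m. \<exists>B. \<forall>x\<in>lev EW m. L (fst x, 0) \<in> lev F' m \<and> nrm F' m (L (fst x, 0)) \<le> B * nrm EW m x"
    for F' :: "'b scale"
    unfolding sc_operator_def
  proof (intro conjI ballI allI)
    show "\<exists>B. \<forall>x\<in>lev EW m. nrm F' m (L (fst x, 0)) \<le> B * nrm EW m x" for m
      using bd[of m] by blast
    show "L (fst x, 0) \<in> lev F' m" if "x \<in> lev EW m" for x m
      using bd[of m] that by blast
  qed (simp_all add: lin)
  show "sc_operator EW F (\<lambda>x. L (fst x, 0))"
    by (rule op) (rule sc_operator_fst_part[OF L order_refl])
  show "sc_operator EW (shift_scale F) (\<lambda>x. L (fst x, 0))"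
    by (rule op) (use sc_operator_fst_part[OF L le_SucI[OF order_refl]] in simp)
qed

lemma sc_plus_affine_fst:
  fixes F :: "'b::real_vector scale"
  assumes F: "normed_scale F" and a: "\<And>m. a \<in> lev F m" and L: "sc_operator EW F L"
  shows "sc_plus EW F U (\<lambda>x. a + L (fst x, 0))"
proof -
  have "L (fst x, 0) \<in> lev F (Suc m)" for x m
    using sc_operator_mem[OF sc_operator_fst_zero(2)[OF L], of "(fst x, 0)" m]
      normed_scale.zero_mem[OF sc_banach_normed_scale[OF W]] by simp
  then have "a + L (fst x, 0) \<in> lev F (Suc m)" for x m
    using a normed_scale.add_mem[OF F] by blast
  then show ?thesis
    unfolding sc_plus_def using a sc_operator_fst_zero[OF L]
    by (auto intro!: sc_smooth_affine F normed_scale_shift)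
qed

lemma linearization_graph:
  fixes L :: "(real ^ 'n) \<times> 'w \<Rightarrow> (real ^ 'N::finite) \<times> 'w"
  assumes L: "sc_operator EW (prod_scale const_scale W) L" and snd_L: "\<And>w. snd (L (0, w)) = w"
  shows "bounded_linear (\<lambda>w. fst (L (0, w)))" and "L x - L (fst x, 0) = (fst (L (0, snd x)), snd x)"
proof -
  interpret W: normed_scale W
    by (rule sc_banach_normed_scale[OF W])
  have add: "L (a + b) = L a + L b" and scale: "L (r *\<^sub>R a) = r *\<^sub>R L a" for a b r
    using sc_operator_add[OF L] sc_operator_scaleR[OF L] by (simp_all add: sc_banach_lev_0[OF W])
  obtain B where B: "\<forall>x\<in>lev EW 0. nrm (prod_scale const_scale W) 0 (L x) \<le> B * nrm EW 0 x"
    using sc_operator_bound[OF L normed_scale_EW] by blast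
  show "bounded_linear (\<lambda>w. fst (L (0, w)))"
  proof (rule bounded_linear_intro)
    show "fst (L (0, w1 + w2)) = fst (L (0, w1)) + fst (L (0, w2))" for w1 w2
      using add[of "(0, w1)" "(0, w2)"] by simp
    show "fst (L (0, r *\<^sub>R w)) = r *\<^sub>R fst (L (0, w))" for r w
      using scale[of r "(0, w)"] by simp
    show "norm (fst (L (0, w))) \<le> norm w * B" for w
    proof -
      have "norm (fst (L (0, w))) \<le> nrm (prod_scale const_scale W) 0 (L (0, w))"
        by (rule nrm_prod_const_fst_le)
      also have "\<dots> \<le> B * nrm EW 0 (0, w)"
        using B by (simp add: sc_banach_lev_0[OF W])
      also have "nrm EW 0 (0, w) = norm w"
        by (simp add: nrm_prod_const_zero_fst W.nrm_nonneg sc_banach_lev_0[OF W] sc_banach_nrm_0[OF W])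
      finally show ?thesis
        by (simp add: mult.commute)
    qed
  qed
  have "L x = L (fst x, 0) + L (0, snd x)"
    using add[of "(fst x, 0)" "(0, snd x)"] by simp
  then show "L x - L (fst x, 0) = (fst (L (0, snd x)), snd x)"
    using snd_L[of "snd x"] by (simp add: prod_eq_iff)
qed

lemma contraction_along_axis:
  fixes g :: "(real ^ 'n) \<times> 'w \<Rightarrow> (real ^ 'N::finite) \<times> 'w"
  assumes ct: "sc0_contraction (quadrant J) W U (\<lambda>p. snd (g p - g (0, 0)))" and e: "0 < e" "e < 1"
  shows "\<forall>\<^sub>F t in at_right 0. norm (t *\<^sub>R w - snd (g (0, t *\<^sub>R w) - g (0, 0))) \<le> e * (t * norm w)"
proof -
  obtain d where d: "d > 0" "\<And>v w w'. (v, w) \<in> U 0 \<Longrightarrow> (v, w') \<in> U 0 \<Longrightarrow> norm v < d \<Longrightarrow>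
      norm w < d \<Longrightarrow> norm w' < d \<Longrightarrow>
      norm ((w - snd (g (v, w) - g (0, 0))) - (w' - snd (g (v, w') - g (0, 0)))) \<le> e * norm (w - w')"
    using sc0_contractionD[OF ct e, of 0] by (auto simp: sc_banach_nrm_0[OF W])
  have "\<forall>\<^sub>F t in at_right 0. 0 + t *\<^sub>R (0, w) \<in> U 0"
    by (intro germ_nbhd_eventually_segment[OF U normed_scale_EW germ_nbhd_zero[OF U]])
      (auto simp: quadrant_def sc_banach_lev_0[OF W])
  moreover have "((\<lambda>t. t * norm w) \<longlongrightarrow> 0) (at_right 0)"
    by (rule tendsto_eq_intros | simp)+
  then have "\<forall>\<^sub>F t in at_right 0. t * norm w < d"
    using d(1) by (rule order_tendstoD)
  moreover have "\<forall>\<^sub>F t in at_right (0::real). t > 0"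
    by (simp add: eventually_at_right_less)
  ultimately show ?thesis
  proof eventually_elim
    case (elim t)
    have "(0, 0) \<in> U 0"
      using germ_nbhd_zero[OF U] by (simp add: zero_prod_def)
    with elim show ?case
      using d(2)[of 0 "t *\<^sub>R w" 0] d(1) by simp
  qed
qed

text \<open>Along $t \mapsto (0, t w)$ both the contraction property and the first order approximation
  of $g$ at $0$ control $P(g(0, t w) - g(0, 0))$, by $t w$ and by $t\,P\,Dg(0)(0, w)$ respectively.\<close>
lemma contraction_deriv_snd_approx:
  fixes g :: "(real ^ 'n) \<times> 'w \<Rightarrow> (real ^ 'N::finite) \<times> 'w"
  assumes ct: "sc0_contraction (quadrant J) W U (\<lambda>p. snd (g p - g (0, 0)))"
    and D: "sc_deriv EW (prod_scale const_scale W) U g 0 L"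
    and w: "w \<in> lev W 1" and e: "0 < e" "e < 1"
  shows "norm (w - snd (L (0, w))) \<le> e * (norm w + nrm W 1 w)"
proof -
  interpret W: normed_scale W
    by (rule sc_banach_normed_scale[OF W])
  have w0: "(0, w) \<in> lev EW 1"
    using w by simp
  have nrm_w0: "nrm EW 1 (0, w) = nrm W 1 w"
    using W.nrm_nonneg[OF w] by (rule nrm_prod_const_zero_fst)
  have "\<forall>\<^sub>F t in at_right 0. 0 + t *\<^sub>R (0, w) \<in> U 1"
    using w0 by (intro germ_nbhd_eventually_segment[OF U normed_scale_EW germ_nbhd_zero[OF U]])
      (auto simp: quadrant_def)
  from sc_deriv_along[OF normed_scale_EW D w0 this e(1), unfolded nrm_w0]
  have ev_t: "\<forall>\<^sub>F t in at_right 0. t > 0 \<and> norm (t *\<^sub>R w - snd (g (0, t *\<^sub>R w) - g (0, 0))) \<le> e * (t * norm w) \<and>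
      nrm (prod_scale const_scale W) 0 (g (0, t *\<^sub>R w) - g 0 - t *\<^sub>R L (0, w)) \<le> e * (t * nrm W 1 w)"
    by (intro eventually_conj contraction_along_axis[OF ct e])
      (simp_all add: eventually_at_right_less)
  obtain t where t: "t > 0" and A: "norm (t *\<^sub>R w - snd (g (0, t *\<^sub>R w) - g (0, 0))) \<le> e * (t * norm w)"
    and B': "nrm (prod_scale const_scale W) 0 (g (0, t *\<^sub>R w) - g 0 - t *\<^sub>R L (0, w)) \<le> e * (t * nrm W 1 w)"
    using eventually_happens[OF ev_t] by auto
  have B: "norm (snd (g (0, t *\<^sub>R w) - g (0, 0)) - t *\<^sub>R snd (L (0, w))) \<le> e * (t * nrm W 1 w)"
    using nrm_prod_const_snd_le[of W 0 "g (0, t *\<^sub>R w) - g 0 - t *\<^sub>R L (0, w)"] B'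
    by (simp add: sc_banach_nrm_0[OF W] zero_prod_def)
  have "t * norm (w - snd (L (0, w))) = norm (t *\<^sub>R w - t *\<^sub>R snd (L (0, w)))"
    using t by (simp add: scaleR_diff_right[symmetric])
  also have "\<dots> \<le> norm (t *\<^sub>R w - snd (g (0, t *\<^sub>R w) - g (0, 0)))
      + norm (snd (g (0, t *\<^sub>R w) - g (0, 0)) - t *\<^sub>R snd (L (0, w)))"
    by (rule norm_diff_triangle_le[OF order_refl order_refl])
  also have "\<dots> \<le> t * (e * (norm w + nrm W 1 w))"
    using A B by (simp add: algebra_simps)
  finally show ?thesis
    using t by simp
qed

lemma lev0_bounded_linear_snd_axis:
  fixes L :: "(real ^ 'n) \<times> 'w \<Rightarrow> (real ^ 'N::finite) \<times> 'w"
  assumes L: "sc_operator EW (prod_scale const_scale W) L"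
  shows "lev0_bounded_linear W W (\<lambda>w. snd (L (0, w)))"
  unfolding lev0_bounded_linear_def
proof (intro conjI ballI allI)
  interpret W: normed_scale W
    by (rule sc_banach_normed_scale[OF W])
  fix w1 w2 :: 'w and r :: real
  show "snd (L (0, w1 + w2)) = snd (L (0, w1)) + snd (L (0, w2))"
    "snd (L (0, r *\<^sub>R w1)) = r *\<^sub>R snd (L (0, w1))"
    using sc_operator_add[OF L, of "(0, w1)" "(0, w2)"] sc_operator_scaleR[OF L, of "(0, w1)" r]
    by (simp_all add: sc_banach_lev_0[OF W])
  obtain B where B: "\<forall>x\<in>lev EW 0. nrm (prod_scale const_scale W) 0 (L x) \<le> B * nrm EW 0 x"
    using sc_operator_bound[OF L normed_scale_EW] by blast
  have "nrm W 0 (snd (L (0, w))) \<le> B * nrm W 0 w" for w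
  proof -
    have "nrm W 0 (snd (L (0, w))) \<le> nrm (prod_scale const_scale W) 0 (L (0, w))"
      by (rule nrm_prod_const_snd_le)
    also have "\<dots> \<le> B * nrm EW 0 (0, w)"
      using B by (simp add: sc_banach_lev_0[OF W])
    also have "nrm EW 0 (0, w) = nrm W 0 w"
      by (simp add: nrm_prod_const_zero_fst W.nrm_nonneg sc_banach_lev_0[OF W])
    finally show ?thesis .
  qed
  then show "\<exists>B. \<forall>w\<in>lev W 0. nrm W 0 (snd (L (0, w))) \<le> B * nrm W 0 w"
    by blast
qed (simp add: sc_banach_lev_0[OF W])

text \<open>The contraction property forces the $W$-component of $D_w g(0)$ to be the identity: first
  on $W_1$, where the two first order approximations can be compared, then on $W$ by density.\<close>
lemma contraction_deriv_snd:
  fixes g :: "(real ^ 'n) \<times> 'w \<Rightarrow> (real ^ 'N::finite) \<times> 'w"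
  assumes ct: "sc0_contraction (quadrant J) W U (\<lambda>p. snd (g p - g (0, 0)))"
    and D: "sc_deriv EW (prod_scale const_scale W) U g 0 L"
    and L: "sc_operator EW (prod_scale const_scale W) L"
  shows "snd (L (0, w)) = w"
proof -
  interpret W: normed_scale W
    by (rule sc_banach_normed_scale[OF W])
  have on_lev1: "snd (L (0, w)) = w" if w: "w \<in> lev W 1" for w
  proof -
    have "norm (w - snd (L (0, w))) \<le> 0"
    proof (rule nonpos_if_le_eps_mult)
      fix e :: real assume "e > 0"
      have "norm (w - snd (L (0, w))) \<le> min e (1/2) * (norm w + nrm W 1 w)"
        using contraction_deriv_snd_approx[OF ct D w, of "min e (1/2)"] \<open>e > 0\<close> by simp
      also have "\<dots> \<le> e * (norm w + nrm W 1 w)"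
        using W.nrm_nonneg[OF w] by (intro mult_right_mono) auto
      finally show "norm (w - snd (L (0, w))) \<le> e * (norm w + nrm W 1 w)" .
    qed
    then show ?thesis by simp
  qed
  have "lev0_bounded_linear W W (\<lambda>w. w)"
    unfolding lev0_bounded_linear_def by (auto intro: exI[of _ 1])
  then show ?thesis
    using lev0_bounded_linear_eq_if_eq_on_lev1[OF W.normed_scale_axioms sc_banach_levels_dense[OF W]
        W.normed_scale_axioms lev0_bounded_linear_snd_axis[OF L] _ on_lev1]
    by (simp add: sc_banach_lev_0[OF W])
qed

end

theorem proposition3p5:
  fixes W :: "'w::banach scale"
    and J :: "'n::finite set"
    and U :: "nat \<Rightarrow> ((real ^ 'n) \<times> 'w) set"
    and g :: "(real ^ 'n) \<times> 'w \<Rightarrow> (real ^ 'N::finite) \<times> 'w"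
  assumes "sc_banach W"
    and "germ_nbhd (prod_scale const_scale W) (quadrant J \<times> UNIV) U"
    and "sc_smooth (prod_scale const_scale W) (prod_scale const_scale W) U g"
    and "sc0_contraction (quadrant J) W U (\<lambda>p. snd (g p - g (0, 0)))"
  shows "lin_fredholm_index (prod_scale const_scale W) (prod_scale const_scale W) U g
           (int CARD('n) - int CARD('N))"
proof -
  note W = assms(1) and U = assms(2) and sck = assms(3)[unfolded sc_smooth_def, rule_format]
  have E: "normed_scale (prod_scale (const_scale :: (real ^ 'n) scale) W)"
    and F: "normed_scale (prod_scale (const_scale :: (real ^ 'N) scale) W)"
    using normed_scale_prod_const[OF sc_banach_normed_scale[OF W]] by blast+
  obtain L where D: "sc_deriv (prod_scale const_scale W) (prod_scale const_scale W) U g 0 L"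
    and L: "sc_operator (prod_scale const_scale W) (prod_scale const_scale W) L"
    using sc1_deriv_at_0[OF E F U sck] by blast
  define c where "c w = fst (L (0, w))" for w
  note graph = linearization_graph[OF W U L contraction_deriv_snd[OF W U assms(4) D L], folded c_def]
  have "sc_plus (prod_scale const_scale W) (prod_scale const_scale W) U (\<lambda>x. g 0 + L (fst x, 0))"
    using sck_value_at_0_mem[OF E U sck] by (rule sc_plus_affine_fst[OF W U F _ L])
  moreover have "sc_deriv (prod_scale const_scale W) (prod_scale const_scale W) U
      (\<lambda>x. g x - (g 0 + L (fst x, 0))) 0 (\<lambda>x. (c (snd x), snd x))"
    using sc_deriv_minus_sc_operator[OF E _ F D sc_operator_fst_zero(1)[OF W U L]] graph(2)
    by (simp add: sc_banach_lev_0[OF W])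
  moreover have "g 0 + L (fst 0, 0) = g 0"
    using sc_operator_scaleR[OF L, of 0 0] sc_banach_lev_0[OF W] by (simp add: zero_prod_def)
  ultimately show ?thesis
    unfolding lin_fredholm_index_def using sc_fredholm_index_graph[OF W graph(1)] by blast
qed

end
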